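(* Let $n\ge 1$. The inverses of the lower triangular matrices \[ \big(h_{2m-k}(\{1,q\}^{k-m+1})\big)_{0\leq k,m\leq n},\quad (c_{k,m}(q))_{1\leq k,m\leq n},\quad (g_{k,m}(q))_{1\leq k,m\leq n},\quad (d_{k,m}(q))_{1\leq k,m\leq n} \] (row index $k$, column index $m$) are, respectively, the lower triangular matrices whose $(k,m)$ entries for $k\ge m$ are \begin{align*} &(-1)^{k-m}\frac{[m]!}{[k+1]!}P_{k,k-m}(q) \quad (0\le m\le k\le n),\\ &(-1)^{k-m}\frac{(1-q)^{k-m+1}Q_{k,k-m}(q)}{\prod_{i=0}^{k-m}(1-q^{2k-2i+1})}\quad (1\le m\le k\le n),\\ &(-1)^{k-m}\frac{G_{k,k-m}(q)}{\prod_{i=0}^{k-m}(1+q^{k-i})}\quad (1\le m\le k\le n),\\ &(-1)^{k-m}\frac{H_{k,k-m}(q)}{(1+q)^{k-m+1}\prod_{i=0}^{k-m}(1+q^{2k-2i-1})}\quad (1\le m\le k\le n). \end{align*}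
   Context: $q$ is an indeterminate with square root $q^{1/2}$; $[k]=\frac{1-q^k}{1-q}$, $[k]!=\prod_{i=1}^k[i]$, $[0]!=1$. For integers $r,s\ge 0$, $h_n(\{1\}^r,\{x\}^s)$ is defined by $\sum_{n\geq0}h_n(\{1\}^r,\{x\}^s)z^n=\frac{1}{(1-z)^r(1-xz)^s}$ (so $h_n=0$ for $n<0$), with $h_n=0$ if $r<0$ or $s<0$; $h_n(\{1,x\}^r):=h_n(\{1\}^r,\{x\}^r)$. For integers $k,m$: $c_{k,m}(q)=h_{2m-k}(\{1,q^2\}^{k-m+1})+q\,h_{2m-k-1}(\{1,q^2\}^{k-m+1})$, $g_{k,m}(q)=h_{2m-k}(\{1\}^{k-m+1},\{q\}^{k-m})+h_{2m-k}(\{1\}^{k-m},\{q\}^{k-m+1})$, $d_{k,m}(q)=g_{k,m}(q^2)+q\,g_{k-1,m-1}(q^2)$. Let $S_{m,n}(q)=\sum_{k=1}^n\frac{[2k]}{[2]}[k]^{m-1}q^{\frac{m+1}{2}(n-k)}$ and $T_{m,n}(q)=\sum_{k=1}^n(-1)^{n-k}[k]^mq^{\frac m2(n-k)}$. The polynomials $P_{m,j},Q_{m,j},G_{m,j},H_{m,j}\in\mathbb{Z}[q]$ are those (shown to exist by Guo and Zeng, and uniquely determined) such that for all $n\ge1$: $S_{2m+1,n}(q)=\sum_{k=0}^m(-q^n)^{m-k}\frac{[k]!}{[m+1]!}P_{m,m-k}(q)\frac{([n][n+1])^{k+1}}{[2]}$ for $m\ge0$; $S_{2m,n}(q)=(1-q^{n+\frac12})\sum_{k=0}^m(-q^n)^{m-k}\frac{(1-q^{\frac12})^{m-k}Q_{m,m-k}(q^{\frac12})}{\prod_{i=0}^{m-k}(1-q^{m-i+\frac12})}\frac{([n][n+1])^k}{[2]}$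 for $m\ge1$; $T_{2m,n}(q)=\sum_{k=1}^m(-q^n)^{m-k}\frac{G_{m,m-k}(q)}{\prod_{i=0}^{m-k}(1+q^{m-i})}([n][n+1])^k$ for $m\ge1$; $T_{2m-1,n}(q)=(-1)^{m+n}H_{m,m-1}(q^{\frac12})\frac{q^{(m-\frac12)n}}{(1+q^{\frac12})^m\prod_{i=0}^{m-1}(1+q^{m-i-\frac12})}+\frac{1-q^{n+\frac12}}{1-q^{\frac12}}\sum_{k=1}^m(-q^n)^{m-k}\frac{H_{m,m-k}(q^{\frac12})([n][n+1])^{k-1}}{(1+q^{\frac12})^{m-k+1}\prod_{i=0}^{m-k}(1+q^{m-i-\frac12})}$ for $m\ge1$. *)

theory Defs
  imports "HOL-Computational_Algebra.Computational_Algebra"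
begin

definition qint :: "real \<Rightarrow> nat \<Rightarrow> real" where
  "qint q k = (1 - q ^ k) / (1 - q)"

definition qfact :: "real \<Rightarrow> nat \<Rightarrow> real" where
  "qfact q k = (\<Prod>i=1..k. qint q i)"

(* h_n({1}^r,{x}^s): coefficient of z^n in 1/((1-z)^r (1-xz)^s); zero if n,r or s negative *)
definition hh :: "int \<Rightarrow> int \<Rightarrow> int \<Rightarrow> real \<Rightarrow> real" where
  "hh n r s x = (if n < 0 \<or> r < 0 \<or> s < 0 then 0
     else fps_nth (inverse ((1 - fps_X) ^ nat r * (1 - fps_const x * fps_X) ^ nat s)) (nat n))"

definition hsym :: "int \<Rightarrow> int \<Rightarrow> real \<Rightarrow> real" where
  "hsym n r x = hh n r r x"

definition cpol :: "int \<Rightarrow> int \<Rightarrow> real \<Rightarrow> real" where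
  "cpol k m q = hsym (2*m - k) (k - m + 1) (q^2) + q * hsym (2*m - k - 1) (k - m + 1) (q^2)"

definition gpol :: "int \<Rightarrow> int \<Rightarrow> real \<Rightarrow> real" where
  "gpol k m q = hh (2*m - k) (k - m + 1) (k - m) q + hh (2*m - k) (k - m) (k - m + 1) q"

definition dpol :: "int \<Rightarrow> int \<Rightarrow> real \<Rightarrow> real" where
  "dpol k m q = gpol k m (q^2) + q * gpol (k - 1) (m - 1) (q^2)"

(* S_{m,n}(q) and T_{m,n}(q); q^(a/2) is written sqrt q ^ a *)
definition Ssum :: "nat \<Rightarrow> nat \<Rightarrow> real \<Rightarrow> real" where
  "Ssum m n q = (\<Sum>k=1..n. qint q (2*k) / qint q 2 * qint q k ^ (m - 1)
                          * sqrt q ^ ((m + 1) * (n - k)))"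

definition Tsum :: "nat \<Rightarrow> nat \<Rightarrow> real \<Rightarrow> real" where
  "Tsum m n q = (\<Sum>k=1..n. (-1) ^ (n - k) * qint q k ^ m * sqrt q ^ (m * (n - k)))"

definition evp :: "int poly \<Rightarrow> real \<Rightarrow> real" where
  "evp p x = poly (map_poly real_of_int p) x"

(* The polynomial families P_{m,j}, Q_{m,j}, G_{m,j}, H_{m,j}, defined (as in the paper) as the
   unique integer polynomials making the stated identities hold for all n \<ge> 1
   (the identities being read as identities of functions of q > 0, q \<noteq> 1). *)
definition Pfam :: "nat \<Rightarrow> nat \<Rightarrow> int poly" where
  "Pfam m = (THE f. (\<forall>j>m. f j = 0) \<and>
     (\<forall>n\<ge>1. \<forall>q::real. 0 < q \<and> q \<noteq> 1 \<longrightarrow>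
        Ssum (2*m+1) n q = (\<Sum>k=0..m. (- (q ^ n)) ^ (m - k) * qfact q k / qfact q (m+1)
            * evp (f (m - k)) q * (qint q n * qint q (n+1)) ^ (k+1) / qint q 2)))"

definition Qfam :: "nat \<Rightarrow> nat \<Rightarrow> int poly" where
  "Qfam m = (THE f. (\<forall>j>m. f j = 0) \<and>
     (\<forall>n\<ge>1. \<forall>q::real. 0 < q \<and> q \<noteq> 1 \<longrightarrow>
        Ssum (2*m) n q = (1 - sqrt q ^ (2*n+1)) *
          (\<Sum>k=0..m. (- (q ^ n)) ^ (m - k) * (1 - sqrt q) ^ (m - k) * evp (f (m - k)) (sqrt q)
             / (\<Prod>i=0..m-k. 1 - sqrt q ^ (2*(m-i)+1))
             * (qint q n * qint q (n+1)) ^ k / qint q 2)))"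

definition Gfam :: "nat \<Rightarrow> nat \<Rightarrow> int poly" where
  "Gfam m = (THE f. (\<forall>j\<ge>m. f j = 0) \<and>
     (\<forall>n\<ge>1. \<forall>q::real. 0 < q \<and> q \<noteq> 1 \<longrightarrow>
        Tsum (2*m) n q = (\<Sum>k=1..m. (- (q ^ n)) ^ (m - k) * evp (f (m - k)) q
             / (\<Prod>i=0..m-k. 1 + q ^ (m-i)) * (qint q n * qint q (n+1)) ^ k)))"

definition Hfam :: "nat \<Rightarrow> nat \<Rightarrow> int poly" where
  "Hfam m = (THE f. (\<forall>j\<ge>m. f j = 0) \<and>
     (\<forall>n\<ge>1. \<forall>q::real. 0 < q \<and> q \<noteq> 1 \<longrightarrow>
        Tsum (2*m-1) n q =
          (-1) ^ (m + n) * evp (f (m - 1)) (sqrt q) * sqrt q ^ ((2*m-1)*n)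
            / ((1 + sqrt q) ^ m * (\<Prod>i=0..m-1. 1 + sqrt q ^ (2*(m-i)-1)))
          + (1 - sqrt q ^ (2*n+1)) / (1 - sqrt q) *
            (\<Sum>k=1..m. (- (q ^ n)) ^ (m - k) * evp (f (m - k)) (sqrt q)
               * (qint q n * qint q (n+1)) ^ (k - 1)
               / ((1 + sqrt q) ^ (m - k + 1) * (\<Prod>i=0..m-k. 1 + sqrt q ^ (2*(m-i)-1))))))"

definition Ppol :: "nat \<Rightarrow> nat \<Rightarrow> int poly" where "Ppol m j = Pfam m j"
definition Qpol :: "nat \<Rightarrow> nat \<Rightarrow> int poly" where "Qpol m j = Qfam m j"
definition Gpol :: "nat \<Rightarrow> nat \<Rightarrow> int poly" where "Gpol m j = Gfam m j"
definition Hpol :: "nat \<Rightarrow> nat \<Rightarrow> int poly" where "Hpol m j = Hfam m j"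

definition inverse_on :: "nat \<Rightarrow> nat \<Rightarrow> (nat \<Rightarrow> nat \<Rightarrow> real) \<Rightarrow> (nat \<Rightarrow> nat \<Rightarrow> real) \<Rightarrow> bool" where
  "inverse_on lo hi A B \<longleftrightarrow>
     (\<forall>k\<in>{lo..hi}. \<forall>m\<in>{lo..hi}.
        (\<Sum>j=lo..hi. A k j * B j m) = (if k = m then 1 else 0) \<and>
        (\<Sum>j=lo..hi. B k j * A j m) = (if k = m then 1 else 0))"

end

theory Submission
  imports Defs
begin

text \<open>
  Put \<open>s = \<surd>q\<close>, \<open>L\<^sub>n = qsym s n = (s\<^sup>n - s\<^sup>-\<^sup>n) / (s - s\<^sup>-\<^sup>1)\<close> and
  \<open>V\<^sub>n = qsym_prod s n = L\<^sub>n L\<^sub>n\<^sub>+\<^sub>1\<close>, so that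
  \<open>[n][n+1] = s\<^sup>2\<^sup>n\<^sup>-\<^sup>1 V\<^sub>n\<close>. The neighbours \<open>a = L\<^sub>n\<^sub>+\<^sub>2\<close>, \<open>b = L\<^sub>n\<close> of \<open>y = L\<^sub>n\<^sub>+\<^sub>1\<close> satisfy
  \<open>a + b = (s + 1/s) y\<close> and \<open>a b = y\<^sup>2 - 1\<close>, hence \<open>y\<^sup>k h\<^sub>k(a, b)\<close> and \<open>y\<^sup>k (a\<^sup>k + b\<^sup>k)\<close> are polynomials
  in \<open>z = y\<^sup>2/s\<^sup>2\<close> whose coefficients obey the recurrences of \<open>h\<^sub>n({1,q}\<^sup>r)\<close>: they are the entries
  of the first and third matrices (the second and fourth add a shifted copy). Telescoping
  \<open>V\<^sub>n\<^sub>+\<^sub>1\<^sup>k\<^sup>+\<^sup>1 - V\<^sub>n\<^sup>k\<^sup>+\<^sup>1 = (a - b) y \<cdot> y\<^sup>k h\<^sub>k(a, b)\<close>, and its alternating and \<open>(L\<^sub>n + L\<^sub>n\<^sub>+\<^sub>1)\<close>-weighted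
  variants, writes the powers of \<open>V\<^sub>n\<close> as the matrix applied to power sums in \<open>L\<^sub>i\<^sup>2/s\<^sup>2\<close>, of which
  \<open>S\<^sub>m\<^sub>,\<^sub>n\<close> and \<open>T\<^sub>m\<^sub>,\<^sub>n\<close> are instances. Inverting the lower triangular matrix expands \<open>S\<close> and \<open>T\<close> in
  powers of \<open>V\<^sub>n\<close> with the entries of the inverse as coefficients. As \<open>V\<^sub>n\<close> is strictly increasing
  these expansions are unique, so the polynomials of the paper are the entries of the inverses.
\<close>

section \<open>Complete homogeneous symmetric functions in two kinds of variables\<close>

definition hh_series :: "nat \<Rightarrow> nat \<Rightarrow> real \<Rightarrow> real fps" where
  "hh_series r s x = inverse ((1 - fps_X) ^ r * (1 - fps_const x * fps_X) ^ s)"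

lemma hh_eq_series:
  "hh n r s x = (if n < 0 \<or> r < 0 \<or> s < 0 then 0 else hh_series (nat r) (nat s) x $ nat n)"
  by (simp add: hh_def hh_series_def)

lemma hh_negative: "n < 0 \<or> r < 0 \<or> s < 0 \<Longrightarrow> hh n r s x = 0"
  by (simp add: hh_def)

lemma one_minus_X_mult_inverse: "(1 - fps_const c * fps_X) * inverse (1 - fps_const c * fps_X) = (1 :: real fps)"
  by (simp add: inverse_mult_eq_1')

lemma hh_series_Suc_ones: "(1 - fps_const 1 * fps_X) * hh_series (Suc r) s x = hh_series r s x"
proof -
  have "hh_series (Suc r) s x = inverse (1 - fps_const 1 * fps_X) * hh_series r s x"
    by (simp add: hh_series_def fps_inverse_mult mult.assoc)
  then show ?thesis by (simp only: mult.assoc[symmetric] one_minus_X_mult_inverse mult_1_left)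
qed

lemma hh_series_Suc_x: "(1 - fps_const x * fps_X) * hh_series r (Suc s) x = hh_series r s x"
proof -
  have "hh_series r (Suc s) x = inverse (1 - fps_const x * fps_X) * hh_series r s x"
    by (simp add: hh_series_def fps_inverse_mult mult.assoc mult.left_commute)
  then show ?thesis by (simp only: mult.assoc[symmetric] one_minus_X_mult_inverse mult_1_left)
qed

lemma fps_nth_one_minus_X_mult:
  "((1 - fps_const c * fps_X) * (G :: real fps)) $ n = G $ n - c * (if n = 0 then 0 else G $ (n - 1))"
proof -
  have "(1 - fps_const c * fps_X) * G = G - fps_const c * (fps_X * G)"
    by (simp add: algebra_simps)
  then show ?thesis by (simp only: fps_sub_nth fps_X_mult_nth fps_mult_left_const_nth)
qed

lemma hh_rec_series:
  assumes removed: "(1 - fps_const c * fps_X) * hh_series r' s' x = hh_series r'' s'' x"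
    and n: "n \<ge> 0"
  shows "hh_series r' s' x $ nat n = c * (if n = 0 then 0 else hh_series r' s' x $ nat (n - 1))
           + hh_series r'' s'' x $ nat n"
proof -
  have "nat n = 0 \<or> nat (n - 1) = nat n - 1" using n by auto
  then show ?thesis
    using arg_cong[OF removed, of "\<lambda>G. G $ nat n"] n
    by (auto simp: fps_nth_one_minus_X_mult)
qed

lemma hh_rec_ones: "r \<ge> 1 \<Longrightarrow> hh n r s x = hh (n - 1) r s x + hh n (r - 1) s x"
proof (cases "s < 0 \<or> n < 0")
  case True then show ?thesis by (auto simp: hh_def)
next
  case False
  assume r: "r \<ge> 1"
  then have "nat r = Suc (nat (r - 1))" by simp
  then have "hh_series (nat r) (nat s) x $ nat n = (if n = 0 then 0 else hh_series (nat r) (nat s) x $ nat (n - 1))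
      + hh_series (nat (r - 1)) (nat s) x $ nat n"
    using hh_rec_series[where c = 1, OF hh_series_Suc_ones] False by simp
  then show ?thesis using False r by (auto simp: hh_eq_series)
qed

lemma hh_rec_x: "s \<ge> 1 \<Longrightarrow> hh n r s x = x * hh (n - 1) r s x + hh n r (s - 1) x"
proof (cases "r < 0 \<or> n < 0")
  case True then show ?thesis by (auto simp: hh_def)
next
  case False
  assume s: "s \<ge> 1"
  then have "nat s = Suc (nat (s - 1))" by simp
  then have "hh_series (nat r) (nat s) x $ nat n = x * (if n = 0 then 0 else hh_series (nat r) (nat s) x $ nat (n - 1))
      + hh_series (nat r) (nat (s - 1)) x $ nat n"
    using hh_rec_series[where c = x, OF hh_series_Suc_x] False by simp
  then show ?thesis using False s by (auto simp: hh_eq_series)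
qed

lemma hh_rec_both:
  assumes "r \<ge> 1" "s \<ge> 1"
  shows "hh n r s x = (1 + x) * hh (n - 1) r s x - x * hh (n - 2) r s x + hh n (r - 1) (s - 1) x"
  using hh_rec_ones[OF assms(1), of n s x] hh_rec_ones[OF assms(1), of "n - 1" s x]
    hh_rec_x[OF assms(2), of n "r - 1" x]
  by (simp add: algebra_simps)

lemma hh_empty: "hh n 0 0 x = (if n = 0 then 1 else 0)"
  by (auto simp: hh_eq_series hh_series_def)

lemma hh_degree_0: "r \<ge> 0 \<Longrightarrow> s \<ge> 0 \<Longrightarrow> hh 0 r s x = 1"
  by (simp add: hh_eq_series hh_series_def fps_nth_power_0)

lemma hh_1_0: "n \<ge> 0 \<Longrightarrow> hh n 1 0 x = 1"
proof (induction "nat n" arbitrary: n)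
  case 0 then show ?case by (simp add: hh_degree_0)
next
  case (Suc m)
  then show ?case using Suc.hyps(1)[of "n - 1"] hh_rec_ones[of 1 n 0 x] by (simp add: hh_empty)
qed

lemma hh_0_1: "n \<ge> 0 \<Longrightarrow> hh n 0 1 x = x ^ nat n"
proof (induction "nat n" arbitrary: n)
  case 0 then show ?case by (simp add: hh_degree_0)
next
  case (Suc m)
  then have "nat n = Suc (nat (n - 1))" by simp
  then show ?case using Suc hh_rec_x[of 1 n 0 x] by (simp add: hh_empty)
qed

lemma hh_1_1: "hh (int m) 1 1 x = (\<Sum>i\<le>m. x ^ i)"
proof (induction m)
  case 0 then show ?case by (simp add: hh_degree_0)
next
  case (Suc m)
  have "hh (int (Suc m)) 1 1 x = x * hh (int m) 1 1 x + 1"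
    using hh_rec_x[of 1 "int (Suc m)" 1 x] by (simp add: hh_1_0)
  also have "\<dots> = (\<Sum>i\<le>Suc m. x ^ i)"
    unfolding Suc by (simp add: sum.atMost_Suc_shift sum_distrib_left del: sum.atMost_Suc)
  finally show ?case .
qed

lemma map_poly_of_int_add: "map_poly (of_int :: int \<Rightarrow> real) (p + q) = map_poly of_int p + map_poly of_int q"
  by (rule poly_eqI) (simp add: coeff_map_poly)

lemma map_poly_of_int_mult: "map_poly (of_int :: int \<Rightarrow> real) (p * q) = map_poly of_int p * map_poly of_int q"
  by (rule poly_eqI) (simp add: coeff_map_poly coeff_mult)

lemma map_poly_of_int_minus: "map_poly (of_int :: int \<Rightarrow> real) (- p) = - map_poly of_int p"
  by (rule poly_eqI) (simp add: coeff_map_poly)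

lemma evp_add [simp]: "evp (p + q) x = evp p x + evp q x"
  by (simp add: evp_def map_poly_of_int_add)

lemma evp_mult [simp]: "evp (p * q) x = evp p x * evp q x"
  by (simp add: evp_def map_poly_of_int_mult)

lemma evp_minus [simp]: "evp (- p) x = - evp p x"
  by (simp add: evp_def map_poly_of_int_minus)

lemma evp_diff [simp]: "evp (p - q) x = evp p x - evp q x"
  using evp_add[of p "- q" x] by simp

lemma evp_0 [simp]: "evp 0 x = 0"
  by (simp add: evp_def)

lemma evp_1 [simp]: "evp 1 x = 1"
  by (simp add: evp_def)

lemma evp_pCons [simp]: "evp (pCons c p) x = of_int c + x * evp p x"
  by (simp add: evp_def map_poly_pCons)

lemma evp_sum: "evp (sum f A) x = (\<Sum>a\<in>A. evp (f a) x)"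
  by (induction A rule: infinite_finite_induct) auto

lemma evp_prod: "evp (prod f A) x = (\<Prod>a\<in>A. evp (f a) x)"
  by (induction A rule: infinite_finite_induct) auto

lemma evp_power [simp]: "evp (p ^ k) x = evp p x ^ k"
  by (induction k) auto

lemma evp_eqI:
  assumes "infinite A" and "\<And>x. x \<in> A \<Longrightarrow> evp p x = evp r x"
  shows "p = r"
proof -
  let ?d = "map_poly (of_int :: int \<Rightarrow> real) (p - r)"
  have "A \<subseteq> {x. poly ?d x = 0}"
    using assms(2) by (auto simp flip: evp_def)
  then have "?d = 0"
    using assms(1) poly_roots_finite finite_subset by blast
  then show "p = r"
    by (simp add: map_poly_eq_0_iff)
qed

fun hh_natpoly :: "int poly \<Rightarrow> nat \<Rightarrow> nat \<Rightarrow> nat \<Rightarrow> int poly" where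
  "hh_natpoly X n 0 0 = (if n = 0 then 1 else 0)"
| "hh_natpoly X n (Suc r) s =
     (if n = 0 then hh_natpoly X 0 r s else hh_natpoly X (n - 1) (Suc r) s + hh_natpoly X n r s)"
| "hh_natpoly X n 0 (Suc s) =
     (if n = 0 then hh_natpoly X 0 0 s else X * hh_natpoly X (n - 1) 0 (Suc s) + hh_natpoly X n 0 s)"

lemma evp_hh_natpoly: "evp (hh_natpoly X n r s) t = hh (int n) (int r) (int s) (evp X t)"
proof (induction X n r s rule: hh_natpoly.induct)
  case (1 X n)
  then show ?case by (simp add: hh_empty)
next
  case (2 X n r s)
  then show ?case
    using hh_rec_ones[of "int (Suc r)" "int n" "int s" "evp X t"]
    by (cases "n = 0") (simp_all add: hh_negative of_nat_diff)
next
  case (3 X n s)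
  then show ?case
    using hh_rec_x[of "int (Suc s)" "int n" 0 "evp X t"]
    by (cases "n = 0") (simp_all add: hh_negative of_nat_diff)
qed

definition hh_poly :: "int poly \<Rightarrow> int \<Rightarrow> int \<Rightarrow> int \<Rightarrow> int poly" where
  "hh_poly X n r s = (if n < 0 \<or> r < 0 \<or> s < 0 then 0 else hh_natpoly X (nat n) (nat r) (nat s))"

lemma evp_hh_poly: "evp (hh_poly X n r s) t = hh n r s (evp X t)"
  by (auto simp: hh_poly_def evp_hh_natpoly hh_negative)

section \<open>Inverting lower triangular matrices\<close>

text \<open>\<open>ltinv_numer A k m\<close> is the \<open>(k, m)\<close> entry of \<open>A\<^sup>-\<^sup>1\<close> times \<open>A\<^sub>m\<^sub>m \<cdots> A\<^sub>k\<^sub>k\<close>; unlike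
  the entry itself it is a polynomial in the entries of \<open>A\<close>, which is what makes the families
  \<open>P\<close>, \<open>Q\<close>, \<open>G\<close>, \<open>H\<close> integer polynomials.\<close>

function ltinv_numer :: "(nat \<Rightarrow> nat \<Rightarrow> 'a::comm_ring_1) \<Rightarrow> nat \<Rightarrow> nat \<Rightarrow> 'a" where
  "ltinv_numer A k m = (if k \<le> m then 1 else
     - (\<Sum>j\<in>{m..<k}. A k j * ltinv_numer A j m * (\<Prod>i\<in>{j<..<k}. A i i)))"
  by auto
termination by (relation "measure (\<lambda>(A, k, m). k - m)") auto

declare ltinv_numer.simps [simp del]

lemma evp_ltinv_numer: "evp (ltinv_numer A k m) x = ltinv_numer (\<lambda>i j. evp (A i j) x) k m"
proof (induction A k m rule: ltinv_numer.induct)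
  case (1 A k m)
  then show ?case
    by (cases "k \<le> m")
      (simp_all add: ltinv_numer.simps[of A k m] ltinv_numer.simps[of "\<lambda>i j. evp (A i j) x" k m]
        evp_sum evp_prod)
qed

definition diag_prod :: "(nat \<Rightarrow> nat \<Rightarrow> real) \<Rightarrow> nat \<Rightarrow> nat \<Rightarrow> real" where
  "diag_prod A m k = (\<Prod>i\<in>{m..k}. A i i)"

definition ltinv :: "(nat \<Rightarrow> nat \<Rightarrow> real) \<Rightarrow> nat \<Rightarrow> nat \<Rightarrow> real" where
  "ltinv A k m = (if m \<le> k then ltinv_numer A k m / diag_prod A m k else 0)"

lemma ltinv_above_diag: "k < m \<Longrightarrow> ltinv A k m = 0"
  by (simp add: ltinv_def)

lemma diag_prod_split:
  assumes "m \<le> j" "j < k"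
  shows "diag_prod A m k = diag_prod A m j * (\<Prod>i\<in>{j<..<k}. A i i) * A k k"
proof -
  have "{m..k} = {m..j} \<union> ({j<..<k} \<union> {k})" and "{m..j} \<inter> ({j<..<k} \<union> {k}) = {}"
    using assms by auto
  then show ?thesis
    unfolding diag_prod_def by (simp add: prod.union_disjoint mult.assoc)
qed

lemma diag_prod_reverse: "k \<le> m \<Longrightarrow> diag_prod A k m = (\<Prod>i=0..m-k. A (m - i) (m - i))"
  unfolding diag_prod_def
  by (rule prod.reindex_bij_witness[where i="\<lambda>i. m - i" and j="\<lambda>i. m - i"]) auto

locale lower_triangular =
  fixes A :: "nat \<Rightarrow> nat \<Rightarrow> real" and lo hi :: nat
  assumes diag_nonzero: "\<And>i. lo \<le> i \<Longrightarrow> i \<le> hi \<Longrightarrow> A i i \<noteq> 0"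
    and above_diag: "\<And>i j. i < j \<Longrightarrow> A i j = 0"
begin

lemma diag_prod_nonzero: "lo \<le> m \<Longrightarrow> k \<le> hi \<Longrightarrow> diag_prod A m k \<noteq> 0"
  unfolding diag_prod_def using diag_nonzero by (auto simp: prod_zero_iff)

lemma ltinv_diag_step:
  assumes "m \<in> {lo..hi}" "k \<in> {lo..hi}" "m < k"
  shows "A k k * ltinv A k m = - (\<Sum>j\<in>{m..<k}. A k j * ltinv A j m)"
proof -
  have "A k j * ltinv_numer A j m * (\<Prod>i\<in>{j<..<k}. A i i) * A k k / diag_prod A m k
      = A k j * ltinv A j m" if "j \<in> {m..<k}" for j
  proof -
    have "diag_prod A m j \<noteq> 0" "(\<Prod>i\<in>{j<..<k}. A i i) \<noteq> 0" "A k k \<noteq> 0"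
      using that assms diag_prod_nonzero[of m j] diag_nonzero by (auto simp: prod_zero_iff)
    then show ?thesis
      using that diag_prod_split[of m j k A] by (simp add: ltinv_def field_simps)
  qed
  then have "(\<Sum>j\<in>{m..<k}. A k j * ltinv A j m)
      = (\<Sum>j\<in>{m..<k}. A k j * ltinv_numer A j m * (\<Prod>i\<in>{j<..<k}. A i i)) * A k k / diag_prod A m k"
    by (simp add: sum_distrib_right sum_divide_distrib)
  then show ?thesis
    using assms(3) by (simp add: ltinv_def ltinv_numer.simps[of A k m])
qed

lemma ltinv_right:
  assumes k: "k \<in> {lo..hi}" and m: "m \<in> {lo..hi}"
  shows "(\<Sum>j=lo..hi. A k j * ltinv A j m) = (if k = m then 1 else 0)"
proof -
  have "(\<Sum>j=lo..hi. A k j * ltinv A j m) = (\<Sum>j\<in>{m..k}. A k j * ltinv A j m)"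
    using k m above_diag[of k] by (intro sum.mono_neutral_right) (auto simp: ltinv_def)
  also have "\<dots> = (if k = m then 1 else 0)"
  proof (cases rule: linorder_cases[of k m])
    case equal
    then show ?thesis using diag_nonzero[of m] m by (simp add: ltinv_def diag_prod_def ltinv_numer.simps)
  next
    case greater
    then have "{m..k} = insert k {m..<k}" by auto
    then show ?thesis using ltinv_diag_step[OF m k greater] greater by simp
  qed simp
  finally show ?thesis .
qed

lemma lower_triangular_eq_0:
  assumes "\<And>k. k \<in> {lo..hi} \<Longrightarrow> (\<Sum>j=lo..hi. A k j * X j) = 0"
  shows "k \<in> {lo..hi} \<Longrightarrow> X k = 0"
proof (induction k rule: less_induct)
  case (less k)
  have "(\<Sum>j=lo..hi. A k j * X j) = (\<Sum>j\<in>{lo..k}. A k j * X j)"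
    using less.prems above_diag by (intro sum.mono_neutral_right) auto
  also have "{lo..k} = insert k {lo..<k}" using less.prems by auto
  then have "(\<Sum>j\<in>{lo..k}. A k j * X j) = A k k * X k + (\<Sum>j\<in>{lo..<k}. A k j * X j)"
    by simp
  also have "(\<Sum>j\<in>{lo..<k}. A k j * X j) = 0"
    using less.prems less.IH by (intro sum.neutral) auto
  finally show ?case using assms less.prems diag_nonzero by simp
qed

lemma ltinv_left:
  assumes k: "k \<in> {lo..hi}" and m: "m \<in> {lo..hi}"
  shows "(\<Sum>j=lo..hi. ltinv A k j * A j m) = (if k = m then 1 else 0)"
proof -
  define X where "X i = (\<Sum>j=lo..hi. ltinv A i j * A j m) - (if i = m then 1 else 0)" for i
  have "(\<Sum>j=lo..hi. A k' j * X j) = 0" if k': "k' \<in> {lo..hi}" for k'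
  proof -
    have "(\<Sum>j=lo..hi. A k' j * (\<Sum>i=lo..hi. ltinv A j i * A i m))
        = (\<Sum>i=lo..hi. (\<Sum>j=lo..hi. A k' j * ltinv A j i) * A i m)"
      unfolding sum_distrib_left sum_distrib_right mult.assoc by (rule sum.swap)
    also have "\<dots> = (\<Sum>i=lo..hi. if i = k' then A k' m else 0)"
      using k' ltinv_right by (intro sum.cong) auto
    also have "\<dots> = A k' m" using k' by simp
    also have "\<dots> = (\<Sum>j=lo..hi. A k' j * (if j = m then 1 else 0))"
      using m by (simp add: if_distrib[of "\<lambda>x. _ * x"] cong: if_cong)
    finally show ?thesis
      by (simp add: X_def right_diff_distrib sum_subtractf)
  qed
  then have "X k = 0" using lower_triangular_eq_0 k by blast
  then show ?thesis by (simp add: X_def)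
qed

lemma solve_lower_triangular:
  assumes X: "\<And>k. k \<in> {lo..hi} \<Longrightarrow> X k = (\<Sum>j\<le>k. A k j * Y j)"
    and below_lo: "\<And>k j. lo \<le> k \<Longrightarrow> j < lo \<Longrightarrow> A k j = 0"
    and m: "m \<in> {lo..hi}"
  shows "Y m = (\<Sum>k=lo..hi. ltinv A m k * X k)"
proof -
  have X': "X k = (\<Sum>j=lo..hi. A k j * Y j)" if k: "k \<in> {lo..hi}" for k
  proof -
    have "(\<Sum>j\<le>k. A k j * Y j) = (\<Sum>j=lo..k. A k j * Y j)"
      using k below_lo by (intro sum.mono_neutral_right) auto
    also have "\<dots> = (\<Sum>j=lo..hi. A k j * Y j)"
      using k above_diag by (intro sum.mono_neutral_left) auto
    finally show ?thesis using X[OF k] by simp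
  qed
  have "(\<Sum>k=lo..hi. ltinv A m k * X k) = (\<Sum>k=lo..hi. \<Sum>j=lo..hi. ltinv A m k * (A k j * Y j))"
    by (simp add: X' sum_distrib_left)
  also have "\<dots> = (\<Sum>j=lo..hi. (\<Sum>k=lo..hi. ltinv A m k * A k j) * Y j)"
    unfolding sum_distrib_right mult.assoc by (rule sum.swap)
  also have "\<dots> = (\<Sum>j=lo..hi. if j = m then Y m else 0)"
    using m ltinv_left by (intro sum.cong) auto
  also have "\<dots> = Y m" using m by simp
  finally show ?thesis by simp
qed

end

lemma inverse_on_ltinv:
  assumes "lower_triangular A lo hi"
    and "\<And>k m. k \<in> {lo..hi} \<Longrightarrow> m \<in> {lo..hi} \<Longrightarrow> B k m = ltinv A k m"
  shows "inverse_on lo hi A B"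
proof -
  interpret lower_triangular A lo hi by fact
  have "(\<Sum>j=lo..hi. A k j * B j m) = (\<Sum>j=lo..hi. A k j * ltinv A j m)"
    and "(\<Sum>j=lo..hi. B k j * A j m) = (\<Sum>j=lo..hi. ltinv A k j * A j m)"
    if "k \<in> {lo..hi}" "m \<in> {lo..hi}" for k m
    using assms(2) that by (auto intro: sum.cong)
  then show ?thesis
    unfolding inverse_on_def using ltinv_right ltinv_left by simp
qed

definition hmat :: "real \<Rightarrow> nat \<Rightarrow> nat \<Rightarrow> real" where
  "hmat q k j = hsym (2 * int j - int k) (int k - int j + 1) q"

definition cmat :: "real \<Rightarrow> nat \<Rightarrow> nat \<Rightarrow> real" where
  "cmat t k j = cpol (int k) (int j) t"

definition gmat :: "real \<Rightarrow> nat \<Rightarrow> nat \<Rightarrow> real" where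
  "gmat q k j = gpol (int k) (int j) q"

definition dmat :: "real \<Rightarrow> nat \<Rightarrow> nat \<Rightarrow> real" where
  "dmat t k j = dpol (int k) (int j) t"

lemma hmat_above_diag: "k < j \<Longrightarrow> hmat q k j = 0"
  by (cases "j = k + 1") (auto simp: hmat_def hsym_def hh_negative hh_empty)

lemma gmat_above_diag: "k < j \<Longrightarrow> gmat q k j = 0"
  by (simp add: gmat_def gpol_def hh_negative)

lemma cmat_above_diag: "k < j \<Longrightarrow> cmat t k j = 0"
  by (cases "j = k + 1") (auto simp: cmat_def cpol_def hsym_def hh_negative hh_empty)

lemma dmat_above_diag: "k < j \<Longrightarrow> dmat t k j = 0"
  by (simp add: dmat_def dpol_def gpol_def hh_negative)

lemma gmat_col_0: "1 \<le> k \<Longrightarrow> gmat q k 0 = 0"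
  by (simp add: gmat_def gpol_def hh_negative)

lemma cmat_col_0: "1 \<le> k \<Longrightarrow> cmat t k 0 = 0"
  by (simp add: cmat_def cpol_def hsym_def hh_negative)

lemma dmat_col_0: "1 \<le> k \<Longrightarrow> dmat t k 0 = 0"
  by (simp add: dmat_def dpol_def gpol_def hh_negative)

lemma cmat_eq_hmat:
  "1 \<le> k \<Longrightarrow> cmat t k j = hmat (t\<^sup>2) k j + t * (if 1 \<le> j then hmat (t\<^sup>2) (k - 1) (j - 1) else 0)"
  by (cases "j = 0") (auto simp: cmat_def cpol_def hmat_def hsym_def hh_negative of_nat_diff algebra_simps)

lemma dmat_eq_gmat:
  "1 \<le> k \<Longrightarrow> dmat t k j = gmat (t\<^sup>2) k j + t * (if 1 \<le> j then gmat (t\<^sup>2) (k - 1) (j - 1) else 0)"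
  by (cases "j = 0") (auto simp: dmat_def dpol_def gmat_def gpol_def hh_negative of_nat_diff algebra_simps)

lemma qint_eq_sum: "q \<noteq> 1 \<Longrightarrow> qint q j = (\<Sum>l<j. q ^ l)"
  by (simp add: qint_def geometric_sum field_simps)

lemma qint_pos: "0 < q \<Longrightarrow> q \<noteq> 1 \<Longrightarrow> 1 \<le> j \<Longrightarrow> qint q j > 0"
  by (simp add: qint_eq_sum) (intro sum_pos, auto simp: lessThan_empty_iff)

lemma hmat_diag: "q \<noteq> 1 \<Longrightarrow> hmat q i i = qint q (Suc i)"
  using hh_1_1[of i q] by (simp add: hmat_def hsym_def qint_eq_sum lessThan_Suc_atMost)

lemma gmat_diag: "gmat q i i = 1 + q ^ i"
  by (simp add: gmat_def gpol_def hh_1_0 hh_0_1)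

lemma sum_powers_even_odd: "(\<Sum>l\<le>i. ((t::real)\<^sup>2) ^ l) + t * (\<Sum>l<i. (t\<^sup>2) ^ l) = (\<Sum>l<2 * i + 1. t ^ l)"
proof (induction i)
  case (Suc i)
  have "(\<Sum>l\<le>Suc i. (t\<^sup>2) ^ l) + t * (\<Sum>l<Suc i. (t\<^sup>2) ^ l)
      = ((\<Sum>l\<le>i. (t\<^sup>2) ^ l) + t * (\<Sum>l<i. (t\<^sup>2) ^ l)) + t ^ (2 * i + 1) + t ^ (2 * i + 2)"
    by (simp add: algebra_simps power2_eq_square power_add power_mult)
  then show ?case unfolding Suc by simp
qed simp

lemma cmat_diag: "t \<noteq> 1 \<Longrightarrow> cmat t i i = qint t (2 * i + 1)"
proof -
  assume "t \<noteq> 1"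
  have "cmat t i i = (\<Sum>l\<le>i. (t\<^sup>2) ^ l) + t * (\<Sum>l<i. (t\<^sup>2) ^ l)"
    using hh_1_1[of i "t\<^sup>2"] hh_1_1[of "i - 1" "t\<^sup>2"]
    by (cases i) (simp_all add: cmat_def cpol_def hsym_def hh_negative lessThan_Suc_atMost of_nat_diff)
  then show ?thesis using \<open>t \<noteq> 1\<close> by (simp add: sum_powers_even_odd qint_eq_sum)
qed

lemma dmat_diag: "1 \<le> i \<Longrightarrow> dmat t i i = (1 + t) * (1 + t ^ (2 * i - 1))"
proof -
  assume "1 \<le> i"
  then obtain p where p: "i = Suc p" by (cases i) auto
  have "dmat t i i = 1 + (t\<^sup>2) ^ Suc p + t * (1 + (t\<^sup>2) ^ p)"
    using dmat_eq_gmat[of i t i] p by (simp add: gmat_diag)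
  also have "\<dots> = (1 + t) * (1 + t ^ (2 * i - 1))"
    by (simp add: p power_mult algebra_simps power2_eq_square power_mult_distrib)
  finally show ?thesis .
qed

lemma hmat_rec:
  assumes "2 \<le> k"
  shows "hmat q k j = (1 + q) * (if 1 \<le> j then hmat q (k - 1) (j - 1) else 0)
     - q * (if 2 \<le> j then hmat q (k - 2) (j - 2) else 0) + (if 1 \<le> j then hmat q (k - 2) (j - 1) else 0)"
proof -
  define r where "r = int k - int j + 1"
  have "hh (2 * int j - int k) r r q = (1 + q) * hh (2 * int j - int k - 1) r r q
      - q * hh (2 * int j - int k - 2) r r q + hh (2 * int j - int k) (r - 1) (r - 1) q"
  proof (cases "r \<ge> 1")
    case True
    show ?thesis by (rule hh_rec_both[OF True True])
  next
    case False
    then show ?thesis using assms by (cases "r = 0") (auto simp: r_def hh_empty hh_negative)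
  qed
  then show ?thesis
    using assms
    by (cases "j = 0 \<or> j = 1")
      (auto simp: hmat_def hsym_def r_def hh_negative of_nat_diff algebra_simps)
qed

lemma gpol_rec:
  fixes k m :: int
  assumes "2 * m - k \<ge> 2 \<or> k - m \<ge> 1"
  shows "gpol k m q = (1 + q) * gpol (k - 1) (m - 1) q - q * gpol (k - 2) (m - 2) q + gpol (k - 2) (m - 1) q"
proof (cases "k - m \<ge> 1")
  case True
  then show ?thesis
    using hh_rec_both[of "k - m + 1" "k - m" "2 * m - k" q] hh_rec_both[of "k - m" "k - m + 1" "2 * m - k" q]
    by (simp add: gpol_def algebra_simps)
next
  case False
  show ?thesis
  proof (cases "k = m")
    case True
    with assms have "m \<ge> 2" by simp
    then have "q ^ nat m = q\<^sup>2 * q ^ nat (m - 2)" "q ^ nat (m - 1) = q * q ^ nat (m - 2)"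
      by (simp_all flip: power_Suc power_add add: Suc_nat_eq_nat_zadd1 numeral_2_eq_2)
    then show ?thesis
      using True \<open>m \<ge> 2\<close> by (simp add: gpol_def hh_1_0 hh_0_1 hh_negative algebra_simps power2_eq_square)
  next
    case False
    then show ?thesis using \<open>\<not> k - m \<ge> 1\<close> by (simp add: gpol_def hh_negative)
  qed
qed

lemma gmat_rec:
  assumes "2 \<le> k"
  shows "gmat q k j = (1 + q) * (if 1 \<le> j then gmat q (k - 1) (j - 1) else 0)
     - q * (if 2 \<le> j then gmat q (k - 2) (j - 2) else 0) + (if 1 \<le> j then gmat q (k - 2) (j - 1) else 0)"
proof -
  have "2 * int j - int k \<ge> 2 \<or> int k - int j \<ge> 1" using assms by linarith
  from gpol_rec[OF this, of q] show ?thesis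
    using assms
    by (cases "j = 0 \<or> j = 1") (auto simp: gmat_def gpol_def hh_negative of_nat_diff algebra_simps)
qed

lemma lower_triangular_hmat:
  assumes "0 < q" "q \<noteq> 1"
  shows "lower_triangular (hmat q) lo hi"
proof
  show "hmat q i i \<noteq> 0" for i using qint_pos[OF assms, of "Suc i"] assms(2) by (simp add: hmat_diag)
qed (rule hmat_above_diag)

lemma lower_triangular_cmat:
  assumes "0 < t" "t \<noteq> 1"
  shows "lower_triangular (cmat t) lo hi"
proof
  show "cmat t i i \<noteq> 0" for i using qint_pos[OF assms, of "2 * i + 1"] assms(2) by (simp add: cmat_diag)
qed (rule cmat_above_diag)

lemma lower_triangular_gmat: "0 < q \<Longrightarrow> lower_triangular (gmat q) lo hi"
  by unfold_locales (auto simp: gmat_diag gmat_above_diag add_pos_pos less_imp_neq[symmetric])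

lemma lower_triangular_dmat: "0 < t \<Longrightarrow> lower_triangular (dmat t) 1 hi"
  by unfold_locales (auto simp: dmat_diag dmat_above_diag add_pos_pos less_imp_neq[symmetric])

lemma qfact_split: "k \<le> m \<Longrightarrow> qfact q (Suc m) = qfact q k * (\<Prod>i\<in>{k..m}. qint q (Suc i))"
proof -
  assume km: "k \<le> m"
  have "{1..Suc m} = {1..k} \<union> {Suc k..Suc m}" "{1..k} \<inter> {Suc k..Suc m} = {}"
    using km by auto
  then have "qfact q (Suc m) = qfact q k * (\<Prod>i\<in>{Suc k..Suc m}. qint q i)"
    unfolding qfact_def by (simp add: prod.union_disjoint)
  then show ?thesis by (simp only: prod.shift_bounds_cl_Suc_ivl)
qed

lemma qfact_pos: "0 < q \<Longrightarrow> q \<noteq> 1 \<Longrightarrow> qfact q k > 0"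
  unfolding qfact_def by (rule prod_pos) (auto intro: qint_pos)

lemma diag_prod_hmat:
  "0 < q \<Longrightarrow> q \<noteq> 1 \<Longrightarrow> k \<le> m \<Longrightarrow> diag_prod (hmat q) k m = qfact q (Suc m) / qfact q k"
  using qfact_split[of k m q] qfact_pos[of q k] by (simp add: diag_prod_def hmat_diag)

lemma diag_prod_cmat:
  assumes "t \<noteq> 1" "k \<le> m"
  shows "diag_prod (cmat t) k m = (\<Prod>i=0..m-k. 1 - t ^ (2 * (m - i) + 1)) / (1 - t) ^ (m - k + 1)"
  using assms by (simp add: diag_prod_reverse cmat_diag qint_def prod_dividef Suc_diff_le)

lemma diag_prod_gmat: "k \<le> m \<Longrightarrow> diag_prod (gmat q) k m = (\<Prod>i=0..m-k. 1 + q ^ (m - i))"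
  by (simp add: diag_prod_reverse gmat_diag)

lemma diag_prod_dmat:
  assumes "1 \<le> k" "k \<le> m"
  shows "diag_prod (dmat t) k m = (1 + t) ^ (m - k + 1) * (\<Prod>i=0..m-k. 1 + t ^ (2 * (m - i) - 1))"
  using assms by (simp add: diag_prod_reverse dmat_diag prod.distrib Suc_diff_le)

definition hmat_poly :: "nat \<Rightarrow> nat \<Rightarrow> int poly" where
  "hmat_poly k j = hh_poly [:0, 1:] (2 * int j - int k) (int k - int j + 1) (int k - int j + 1)"

definition cmat_poly :: "nat \<Rightarrow> nat \<Rightarrow> int poly" where
  "cmat_poly k j = hh_poly [:0, 0, 1:] (2 * int j - int k) (int k - int j + 1) (int k - int j + 1)
     + [:0, 1:] * hh_poly [:0, 0, 1:] (2 * int j - int k - 1) (int k - int j + 1) (int k - int j + 1)"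

definition gmat_poly :: "nat \<Rightarrow> nat \<Rightarrow> int poly" where
  "gmat_poly k j = hh_poly [:0, 1:] (2 * int j - int k) (int k - int j + 1) (int k - int j)
     + hh_poly [:0, 1:] (2 * int j - int k) (int k - int j) (int k - int j + 1)"

definition dmat_poly :: "nat \<Rightarrow> nat \<Rightarrow> int poly" where
  "dmat_poly k j = hh_poly [:0, 0, 1:] (2 * int j - int k) (int k - int j + 1) (int k - int j)
     + hh_poly [:0, 0, 1:] (2 * int j - int k) (int k - int j) (int k - int j + 1)
     + [:0, 1:] * (hh_poly [:0, 0, 1:] (2 * int j - int k - 1) (int k - int j + 1) (int k - int j)
       + hh_poly [:0, 0, 1:] (2 * int j - int k - 1) (int k - int j) (int k - int j + 1))"

lemma evp_hmat_poly: "evp (hmat_poly k j) x = hmat x k j"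
  by (simp add: hmat_poly_def evp_hh_poly hmat_def hsym_def)

lemma evp_cmat_poly: "evp (cmat_poly k j) x = cmat x k j"
  by (simp add: cmat_poly_def evp_hh_poly cmat_def cpol_def hsym_def power2_eq_square)

lemma evp_gmat_poly: "evp (gmat_poly k j) x = gmat x k j"
  by (simp add: gmat_poly_def evp_hh_poly gmat_def gpol_def)

lemma evp_dmat_poly: "evp (dmat_poly k j) x = dmat x k j"
  by (simp add: dmat_poly_def evp_hh_poly dmat_def dpol_def gpol_def power2_eq_square algebra_simps)

definition Pinv :: "nat \<Rightarrow> nat \<Rightarrow> int poly" where
  "Pinv m j = (if j \<le> m then (-1) ^ j * ltinv_numer hmat_poly m (m - j) else 0)"

definition Qinv :: "nat \<Rightarrow> nat \<Rightarrow> int poly" where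
  "Qinv m j = (if j < m then (-1) ^ j * ltinv_numer cmat_poly m (m - j) else 0)"

definition Ginv :: "nat \<Rightarrow> nat \<Rightarrow> int poly" where
  "Ginv m j = (if j < m then (-1) ^ j * ltinv_numer gmat_poly m (m - j) else 0)"

definition Hinv :: "nat \<Rightarrow> nat \<Rightarrow> int poly" where
  "Hinv m j = (if j < m then (-1) ^ j * ltinv_numer dmat_poly m (m - j) else 0)"

lemma evp_Pinv: "k \<le> m \<Longrightarrow> evp (Pinv m (m - k)) x = (-1) ^ (m - k) * ltinv_numer (hmat x) m k"
  by (simp add: Pinv_def evp_ltinv_numer evp_hmat_poly)

lemma evp_Qinv: "1 \<le> k \<Longrightarrow> k \<le> m \<Longrightarrow> evp (Qinv m (m - k)) x = (-1) ^ (m - k) * ltinv_numer (cmat x) m k"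
  by (simp add: Qinv_def evp_ltinv_numer evp_cmat_poly)

lemma evp_Ginv: "1 \<le> k \<Longrightarrow> k \<le> m \<Longrightarrow> evp (Ginv m (m - k)) x = (-1) ^ (m - k) * ltinv_numer (gmat x) m k"
  by (simp add: Ginv_def evp_ltinv_numer evp_gmat_poly)

lemma evp_Hinv: "1 \<le> k \<Longrightarrow> k \<le> m \<Longrightarrow> evp (Hinv m (m - k)) x = (-1) ^ (m - k) * ltinv_numer (dmat x) m k"
  by (simp add: Hinv_def evp_ltinv_numer evp_dmat_poly)

section \<open>Symmetric \<open>q\<close>-integers\<close>

definition qsym :: "real \<Rightarrow> nat \<Rightarrow> real" where
  "qsym s n = (s ^ n - 1 / s ^ n) / (s - 1 / s)"

definition qsym_prod :: "real \<Rightarrow> nat \<Rightarrow> real" where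
  "qsym_prod s n = qsym s n * qsym s (Suc n)"

definition qsym_sum :: "real \<Rightarrow> nat \<Rightarrow> real" where
  "qsym_sum s n = qsym s (Suc n) + qsym s n"

locale sym_base =
  fixes s :: real
  assumes s_pos: "s > 0" and s_ne_1: "s \<noteq> 1"
begin

lemma s_ne: "s \<noteq> 0" "s - 1 / s \<noteq> 0" "s\<^sup>2 \<noteq> 1"
proof -
  have "(s - 1) * (s + 1) \<noteq> 0" using s_pos s_ne_1 by simp
  then have "s\<^sup>2 \<noteq> 1" by (simp add: algebra_simps power2_eq_square)
  then show "s \<noteq> 0" "s - 1 / s \<noteq> 0" "s\<^sup>2 \<noteq> 1"
    using s_pos by (auto simp: field_simps power2_eq_square)
qed

lemma qsym_0 [simp]: "qsym s 0 = 0"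
  by (simp add: qsym_def)

lemma qsym_1 [simp]: "qsym s (Suc 0) = 1"
  using s_ne by (simp add: qsym_def)

lemma qsym_eq: "qsym s n = (s ^ n - (1 / s) ^ n) / (s - 1 / s)"
  by (simp add: qsym_def power_one_over)

text \<open>Writing \<open>t = 1/s\<close>, \<open>x = s\<^sup>n\<close>, \<open>y = t\<^sup>n\<close> turns identities between
  consecutive \<open>qsym s n\<close> into polynomial identities modulo \<open>s t = 1\<close>, \<open>x y = 1\<close>.\<close>

lemma qsym_parametrization:
  obtains t x y where "s * t = 1" "x * y = 1" "s - t \<noteq> 0"
    "qsym s n = (x - y) / (s - t)" "qsym s (Suc n) = (s * x - t * y) / (s - t)"
    "qsym s (Suc (Suc n)) = (s * s * x - t * t * y) / (s - t)"
    "qsym s (2 * Suc n) = ((s * x)\<^sup>2 - (t * y)\<^sup>2) / (s - t)"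
proof (rule that[of "1 / s" "s ^ n" "(1 / s) ^ n"])
  show "s ^ n * (1 / s) ^ n = 1" using s_ne by (simp flip: power_mult_distrib)
  show "qsym s (2 * Suc n) = ((s * s ^ n)\<^sup>2 - (1 / s * (1 / s) ^ n)\<^sup>2) / (s - 1 / s)"
    by (simp add: qsym_eq power_mult power2_eq_square mult_ac flip: power_mult_distrib)
qed (use s_ne in \<open>simp_all add: qsym_eq mult.assoc\<close>)

lemma qsym_rec: "qsym s (Suc (Suc n)) + qsym s n = (s + 1 / s) * qsym s (Suc n)"
proof -
  obtain t x y where v: "s * t = 1" "x * y = 1" "s - t \<noteq> 0"
    "qsym s n = (x - y) / (s - t)" "qsym s (Suc n) = (s * x - t * y) / (s - t)"
    "qsym s (Suc (Suc n)) = (s * s * x - t * t * y) / (s - t)"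
    by (rule qsym_parametrization)
  have "t = 1 / s" using v(1) s_ne by (simp add: field_simps)
  moreover have "(s * s * x - t * t * y) + (x - y) = (s + t) * (s * x - t * y)"
    using v by algebra
  ultimately show ?thesis
    unfolding v(4-6) using v(3) by (simp add: add_divide_distrib[symmetric])
qed

lemma qsym_Suc_Suc_mult: "qsym s (Suc (Suc n)) * qsym s n = (qsym s (Suc n))\<^sup>2 - 1"
proof -
  obtain t x y where v: "s * t = 1" "x * y = 1" "s - t \<noteq> 0"
    "qsym s n = (x - y) / (s - t)" "qsym s (Suc n) = (s * x - t * y) / (s - t)"
    "qsym s (Suc (Suc n)) = (s * s * x - t * t * y) / (s - t)"
    by (rule qsym_parametrization)
  have "(s * s * x - t * t * y) * (x - y) = (s * x - t * y)\<^sup>2 - (s - t)\<^sup>2"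
    using v by algebra
  moreover have "A * B = C\<^sup>2 - D\<^sup>2 \<Longrightarrow> D \<noteq> 0 \<Longrightarrow> (A / D) * (B / D) = (C / D)\<^sup>2 - 1"
    for A B C D :: real
    by (simp add: field_simps power2_eq_square)
  ultimately show ?thesis
    unfolding v(4-6) using v(3) by blast
qed

lemma qsym_double: "qsym s (Suc n) * (qsym s (Suc (Suc n)) - qsym s n) = qsym s (2 * Suc n)"
proof -
  obtain t x y where v: "s * t = 1" "x * y = 1" "s - t \<noteq> 0"
    "qsym s n = (x - y) / (s - t)" "qsym s (Suc n) = (s * x - t * y) / (s - t)"
    "qsym s (Suc (Suc n)) = (s * s * x - t * t * y) / (s - t)"
    "qsym s (2 * Suc n) = ((s * x)\<^sup>2 - (t * y)\<^sup>2) / (s - t)"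
    by (rule qsym_parametrization)
  have "(s * x - t * y) * ((s * s * x - t * t * y) - (x - y)) = (s - t) * ((s * x)\<^sup>2 - (t * y)\<^sup>2)"
    using v by algebra
  moreover have "A * (B - C) = D * E \<Longrightarrow> D \<noteq> 0 \<Longrightarrow> (A / D) * (B / D - C / D) = E / D"
    for A B C D E :: real
    by (simp add: field_simps)
  ultimately show ?thesis
    unfolding v(4-7) using v(3) by blast
qed

lemma qint_sq: "qint (s\<^sup>2) j = s ^ j * qsym s j / s"
proof -
  have "(1 - x * x) / (1 - s * s) = x * ((x - 1 / x) / (s - 1 / s)) / s" if "x \<noteq> 0" for x :: real
    using that s_ne by (simp add: field_simps power2_eq_square)
  from this[of "s ^ j"] show ?thesis
    using s_ne by (simp add: qint_def qsym_def power_mult power2_eq_square flip: power_mult_distrib)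
qed

lemma qsym_Suc_eq: "qsym s (Suc n) = (s * s ^ n - 1 / s * (1 / s) ^ n) / (s - 1 / s)"
  by (simp add: qsym_eq)

lemma qsym_Suc: "qsym s (Suc n) = s * qsym s n + (1 / s) ^ n" "qsym s (Suc n) = 1 / s * qsym s n + s ^ n"
proof -
  have "(s * x - t * y) / (s - t) = s * ((x - y) / (s - t)) + y"
    and "(s * x - t * y) / (s - t) = t * ((x - y) / (s - t)) + x"
    if "s - t \<noteq> 0" for t x y :: real
    using that by (simp_all add: field_simps)
  from this[OF s_ne(2)] show "qsym s (Suc n) = s * qsym s n + (1 / s) ^ n" "qsym s (Suc n) = 1 / s * qsym s n + s ^ n"
    unfolding qsym_Suc_eq qsym_eq[of n] by simp_all
qed

lemma qsym_less_Suc: "0 \<le> qsym s n \<and> qsym s n < qsym s (Suc n)"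
proof (induction n)
  case (Suc n)
  then have "0 \<le> qsym s (Suc n)" by simp
  moreover have "(s - 1) * qsym s (Suc n) \<ge> 0 \<or> (1 / s - 1) * qsym s (Suc n) \<ge> 0"
    using \<open>0 \<le> qsym s (Suc n)\<close> s_pos by (cases "s > 1") (auto simp: field_simps)
  moreover have "(1 / s) ^ Suc n > 0" "s ^ Suc n > 0" using s_pos by simp_all
  ultimately show ?case
    using qsym_Suc[of "Suc n"] by (auto simp: algebra_simps)
qed simp

lemma qsym_pos: "1 \<le> n \<Longrightarrow> qsym s n > 0"
  using qsym_less_Suc[of "n - 1"] qsym_less_Suc[of n] by (cases n) auto

lemma strict_mono_qsym_prod: "strict_mono (qsym_prod s)"
  unfolding strict_mono_Suc_iff qsym_prod_def
  using qsym_less_Suc by (metis mult.commute mult_strict_mono')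

lemma infinite_qsym_prod_image: "infinite (qsym_prod s ` {1..})"
  using strict_mono_imp_inj_on[OF strict_mono_qsym_prod] finite_imageD infinite_Ici
  by (metis inj_on_subset subset_UNIV)

lemma qsym_sum_pos: "1 \<le> n \<Longrightarrow> qsym_sum s n > 0"
  unfolding qsym_sum_def using qsym_pos[of n] qsym_pos[of "Suc n"] by simp

lemma qsym_sum_sq: "(qsym_sum s n)\<^sup>2 = 1 + (s + 1 / s + 2) * qsym_prod s n"
proof -
  have rec: "qsym s (Suc (Suc n)) = (s + 1 / s) * qsym s (Suc n) - qsym s n"
    using qsym_rec[of n] by simp
  have "(qsym s (Suc n))\<^sup>2 + (qsym s n)\<^sup>2 = 1 + (s + 1 / s) * (qsym s n * qsym s (Suc n))"
    using qsym_Suc_Suc_mult[of n] unfolding rec by (simp add: algebra_simps power2_eq_square)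
  then show ?thesis
    by (simp add: qsym_sum_def qsym_prod_def algebra_simps power2_eq_square)
qed

lemma odd_power_quotient: "(1 - s ^ (2 * n + 1)) / (1 - s) = s ^ n * qsym_sum s n"
proof -
  define t where "t = 1 / s"
  define x where "x = s ^ n"
  define y where "y = t ^ n"
  have "s * t = 1" "x * y = 1"
    using s_ne unfolding t_def x_def y_def by (simp_all flip: power_mult_distrib)
  then have "(1 - s * x * x) * (s - t) = (x * ((s * x - t * y) + (x - y))) * (1 - s)"
    by algebra
  moreover have "s - t \<noteq> 0" "1 - s \<noteq> 0" using s_ne s_ne_1 unfolding t_def by auto
  ultimately have "(1 - s * x * x) / (1 - s) = x * (((s * x - t * y) + (x - y)) / (s - t))"
    by (simp add: frac_eq_eq)
  moreover have "qsym_sum s n = ((s * x - t * y) + (x - y)) / (s - t)"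
    unfolding qsym_sum_def qsym_Suc_eq qsym_eq[of n] t_def x_def y_def by (simp add: add_divide_distrib)
  moreover have "s ^ (2 * n + 1) = s * x * x"
    by (simp add: x_def power_add power_mult power2_eq_square mult_ac)
  ultimately show ?thesis by (simp only: x_def)
qed

end

section \<open>Power sums of \<open>qsym_prod\<close> in the bases of the four matrices\<close>

definition coeff_poly :: "(nat \<Rightarrow> nat \<Rightarrow> real) \<Rightarrow> nat \<Rightarrow> real poly" where
  "coeff_poly \<Gamma> k = (\<Sum>j\<le>k. monom (\<Gamma> k j) j)"

lemma coeff_recurrence:
  fixes \<Gamma> :: "nat \<Rightarrow> nat \<Rightarrow> real" and G :: "nat \<Rightarrow> real"
  assumes above: "\<And>k j. k < j \<Longrightarrow> \<Gamma> k j = 0"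
    and rec: "\<And>k j. 2 \<le> k \<Longrightarrow> \<Gamma> k j = a * (if 1 \<le> j then \<Gamma> (k - 1) (j - 1) else 0)
                 - b * (if 2 \<le> j then \<Gamma> (k - 2) (j - 2) else 0) + (if 1 \<le> j then \<Gamma> (k - 2) (j - 1) else 0)"
    and G_rec: "\<And>k. 2 \<le> k \<Longrightarrow> G k = a * z * G (k - 1) - (b * z\<^sup>2 - z) * G (k - 2)"
    and G_0: "G 0 = \<Gamma> 0 0" and G_1: "G 1 = \<Gamma> 1 0 + \<Gamma> 1 1 * z"
  shows "G k = (\<Sum>j\<le>k. \<Gamma> k j * z ^ j)"
proof -
  have coeff: "coeff (coeff_poly \<Gamma> k) i = \<Gamma> k i" for k i
    using above[of k i] by (auto simp: coeff_poly_def coeff_sum not_le)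
  have poly_rec: "coeff_poly \<Gamma> k = smult a (monom 1 1 * coeff_poly \<Gamma> (k - 1))
      - smult b (monom 1 2 * coeff_poly \<Gamma> (k - 2)) + monom 1 1 * coeff_poly \<Gamma> (k - 2)" if "2 \<le> k" for k
    by (rule poly_eqI) (simp add: coeff coeff_monom_mult rec[OF that] not_less)
  have eval: "poly (coeff_poly \<Gamma> k) z = (\<Sum>j\<le>k. \<Gamma> k j * z ^ j)" for k
    by (simp add: coeff_poly_def poly_sum poly_monom)
  have "G k = poly (coeff_poly \<Gamma> k) z"
  proof (induction k rule: less_induct)
    case (less k)
    show ?case
    proof (cases "k < 2")
      case True
      then have "k = 0 \<or> k = 1" by auto
      then show ?thesis using G_0 G_1 eval by auto
    next
      case False
      then have "G k = a * z * poly (coeff_poly \<Gamma> (k - 1)) z - (b * z\<^sup>2 - z) * poly (coeff_poly \<Gamma> (k - 2)) z"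
        using G_rec[of k] less.IH[of "k - 1"] less.IH[of "k - 2"] by simp
      also have "\<dots> = poly (coeff_poly \<Gamma> k) z"
        using False by (subst poly_rec[of k]) (simp_all add: poly_monom algebra_simps power2_eq_square)
      finally show ?thesis .
    qed
  qed
  then show ?thesis using eval by simp
qed

fun h2 :: "real \<Rightarrow> real \<Rightarrow> nat \<Rightarrow> real" where
  "h2 a b 0 = 1"
| "h2 a b (Suc k) = a * h2 a b k + b ^ Suc k"

lemma h2_diff: "(a - b) * h2 a b k = a ^ Suc k - b ^ Suc k"
proof (induction k)
  case (Suc k)
  have "(a - b) * h2 a b (Suc k) = a * ((a - b) * h2 a b k) + (a - b) * b ^ Suc k"
    by (simp add: algebra_simps)
  then show ?case unfolding Suc by (simp add: algebra_simps)
qed simp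

lemma h2_rec: "2 \<le> k \<Longrightarrow> h2 a b k = (a + b) * h2 a b (k - 1) - a * b * h2 a b (k - 2)"
  by (auto simp: algebra_simps dest!: le_Suc_ex)

context sym_base
begin

lemma qsym_expansion:
  fixes \<Gamma> :: "nat \<Rightarrow> nat \<Rightarrow> real" and F :: "nat \<Rightarrow> real" and n k :: nat
  defines "a \<equiv> qsym s (Suc (Suc n))" and "b \<equiv> qsym s n" and "y \<equiv> qsym s (Suc n)"
  assumes above: "\<And>k j. k < j \<Longrightarrow> \<Gamma> k j = 0"
    and rec: "\<And>k j. 2 \<le> k \<Longrightarrow> \<Gamma> k j = (1 + s\<^sup>2) * (if 1 \<le> j then \<Gamma> (k - 1) (j - 1) else 0)
                 - s\<^sup>2 * (if 2 \<le> j then \<Gamma> (k - 2) (j - 2) else 0) + (if 1 \<le> j then \<Gamma> (k - 2) (j - 1) else 0)"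
    and F_rec: "\<And>k. 2 \<le> k \<Longrightarrow> F k = (a + b) * F (k - 1) - a * b * F (k - 2)"
    and F_0: "F 0 = \<Gamma> 0 0" and F_1: "y * F 1 / s = \<Gamma> 1 0 + \<Gamma> 1 1 * (y\<^sup>2 / s\<^sup>2)"
  shows "y ^ k * F k = s ^ k * (\<Sum>j\<le>k. \<Gamma> k j * (y\<^sup>2 / s\<^sup>2) ^ j)"
proof -
  define z where "z = y\<^sup>2 / s\<^sup>2"
  have e1: "a + b = (s + 1 / s) * y" and e2: "a * b = y\<^sup>2 - 1"
    unfolding a_def b_def y_def by (rule qsym_rec, rule qsym_Suc_Suc_mult)
  have step: "(y * y * Y) * ((s + 1 / s) * y * H1 - (y\<^sup>2 - 1) * H0) / (s * s * S)
      = (1 + s\<^sup>2) * z * ((y * Y) * H1 / (s * S)) - (s\<^sup>2 * z\<^sup>2 - z) * (Y * H0 / S)"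
    if "S \<noteq> 0" for S Y H1 H0
    using that s_ne(1) by (simp add: z_def field_simps power2_eq_square)
  have "y ^ k * F k / s ^ k = (\<Sum>j\<le>k. \<Gamma> k j * z ^ j)"
  proof (rule coeff_recurrence[OF above rec])
    fix k :: nat assume k: "2 \<le> k"
    then obtain p where p: "k = Suc (Suc p)" by (metis add_2_eq_Suc le_Suc_ex)
    show "y ^ k * F k / s ^ k = (1 + s\<^sup>2) * z * (y ^ (k - 1) * F (k - 1) / s ^ (k - 1))
        - (s\<^sup>2 * z\<^sup>2 - z) * (y ^ (k - 2) * F (k - 2) / s ^ (k - 2))"
      using F_rec[OF k] step[of "s ^ p" "y ^ p" "F (Suc p)" "F p"] s_ne(1)
      unfolding e1 e2 p by simp
  qed (use F_0 F_1 s_ne(1) in \<open>simp_all add: z_def\<close>)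
  then show ?thesis using s_ne(1) unfolding z_def by (simp add: field_simps)
qed

lemma qsym_neighbours_sum: "qsym s (Suc n) * (qsym s (Suc (Suc n)) + qsym s n) / s
    = (1 + s\<^sup>2) * ((qsym s (Suc n))\<^sup>2 / s\<^sup>2)"
  unfolding qsym_rec using s_ne(1) by (simp add: field_simps power2_eq_square)

lemma qsym_expansion_hmat:
  "qsym s (Suc n) ^ k * h2 (qsym s (Suc (Suc n))) (qsym s n) k
     = s ^ k * (\<Sum>j\<le>k. hmat (s\<^sup>2) k j * ((qsym s (Suc n))\<^sup>2 / s\<^sup>2) ^ j)"
proof (rule qsym_expansion[OF hmat_above_diag hmat_rec h2_rec])
  have "hmat (s\<^sup>2) 1 1 = 1 + s\<^sup>2" "hmat (s\<^sup>2) 1 0 = 0"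
    using hh_1_1[of 1 "s\<^sup>2"] by (simp_all add: hmat_def hsym_def hh_negative)
  then show "qsym s (Suc n) * h2 (qsym s (Suc (Suc n))) (qsym s n) 1 / s
      = hmat (s\<^sup>2) 1 0 + hmat (s\<^sup>2) 1 1 * ((qsym s (Suc n))\<^sup>2 / s\<^sup>2)"
    using qsym_neighbours_sum by simp
qed (simp_all add: hmat_def hsym_def hh_degree_0)

lemma qsym_expansion_gmat:
  "qsym s (Suc n) ^ k * (qsym s (Suc (Suc n)) ^ k + qsym s n ^ k)
     = s ^ k * (\<Sum>j\<le>k. gmat (s\<^sup>2) k j * ((qsym s (Suc n))\<^sup>2 / s\<^sup>2) ^ j)"
proof (rule qsym_expansion[OF gmat_above_diag gmat_rec])
  show "qsym s (Suc (Suc n)) ^ k + qsym s n ^ k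
      = (qsym s (Suc (Suc n)) + qsym s n) * (qsym s (Suc (Suc n)) ^ (k - 1) + qsym s n ^ (k - 1))
        - qsym s (Suc (Suc n)) * qsym s n * (qsym s (Suc (Suc n)) ^ (k - 2) + qsym s n ^ (k - 2))"
    if "2 \<le> k" for k
    using that by (auto simp: algebra_simps dest!: le_Suc_ex)
  have "gmat (s\<^sup>2) 1 1 = 1 + s\<^sup>2" "gmat (s\<^sup>2) 1 0 = 0"
    by (simp_all add: gmat_diag gmat_col_0)
  then show "qsym s (Suc n) * (qsym s (Suc (Suc n)) ^ 1 + qsym s n ^ 1) / s
      = gmat (s\<^sup>2) 1 0 + gmat (s\<^sup>2) 1 1 * ((qsym s (Suc n))\<^sup>2 / s\<^sup>2)"
    using qsym_neighbours_sum by simp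
  show "qsym s (Suc (Suc n)) ^ 0 + qsym s n ^ 0 = gmat (s\<^sup>2) 0 0"
    by (simp add: gmat_diag)
qed

end

definition sumP :: "real \<Rightarrow> nat \<Rightarrow> nat \<Rightarrow> real" where
  "sumP s j n = (\<Sum>i=1..n. qsym s (2 * i) * ((qsym s i)\<^sup>2 / s\<^sup>2) ^ j)"

definition sumQ :: "real \<Rightarrow> nat \<Rightarrow> nat \<Rightarrow> real" where
  "sumQ s j n = (\<Sum>i=1..n. qsym s (2 * i) * ((qsym s i)\<^sup>2 / s\<^sup>2) ^ j / qsym s i)"

definition sumG :: "real \<Rightarrow> nat \<Rightarrow> nat \<Rightarrow> real" where
  "sumG s j n = (\<Sum>i=1..n. (-1) ^ (n - i) * ((qsym s i)\<^sup>2 / s\<^sup>2) ^ j)"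

definition sumH :: "real \<Rightarrow> nat \<Rightarrow> nat \<Rightarrow> real" where
  "sumH s j n = (\<Sum>i=1..n. (-1) ^ (n - i) * (((qsym s i)\<^sup>2 / s\<^sup>2) ^ j / qsym s i))"

lemma alternating_sum_Suc:
  "(\<Sum>i=1..Suc n. (-1) ^ (Suc n - i) * (x i :: real)) = x (Suc n) - (\<Sum>i=1..n. (-1) ^ (n - i) * x i)"
proof -
  have "(\<Sum>i=1..n. (-1) ^ (Suc n - i) * x i) = (\<Sum>i=1..n. - ((-1) ^ (n - i) * x i))"
    by (rule sum.cong) (auto simp: Suc_diff_le)
  then show ?thesis by (simp add: sum_negf)
qed

lemma shift_power_sum:
  "z * (\<Sum>j\<le>p. f j * z ^ j) = (\<Sum>j\<le>Suc p. (if 1 \<le> j then f (j - 1) else 0) * (z :: real) ^ j)"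
  by (subst sum.atMost_Suc_shift) (simp add: sum_distrib_left mult_ac)

context sym_base
begin

lemma qsym_expansion_shift:
  assumes expansion: "\<And>k. y ^ k * F k = s ^ k * (\<Sum>j\<le>k. \<Gamma> k j * (y\<^sup>2 / s\<^sup>2) ^ j)"
  shows "y ^ Suc p * F (Suc p) + y\<^sup>2 * (y ^ p * F p)
    = s ^ Suc p * (\<Sum>j\<le>Suc p. (\<Gamma> (Suc p) j + s * (if 1 \<le> j then \<Gamma> p (j - 1) else 0)) * (y\<^sup>2 / s\<^sup>2) ^ j)"
proof -
  define z where "z = y\<^sup>2 / s\<^sup>2"
  have "y\<^sup>2 * (y ^ p * F p) = s ^ Suc p * (s * (z * (\<Sum>j\<le>p. \<Gamma> p j * z ^ j)))"
    using s_ne(1) unfolding expansion z_def by (simp add: field_simps power2_eq_square)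
  also have "s * (z * (\<Sum>j\<le>p. \<Gamma> p j * z ^ j)) = (\<Sum>j\<le>Suc p. s * (if 1 \<le> j then \<Gamma> p (j - 1) else 0) * z ^ j)"
    unfolding shift_power_sum by (simp add: sum_distrib_left distrib_left mult_ac)
  finally show ?thesis
    unfolding expansion z_def[symmetric] by (simp add: distrib_right sum.distrib distrib_left mult_ac)
qed

lemma qsym_prod_power_Suc_diff:
  "qsym_prod s (Suc n) ^ Suc k - qsym_prod s n ^ Suc k
     = qsym s (2 * Suc n) * s ^ k * (\<Sum>j\<le>k. hmat (s\<^sup>2) k j * ((qsym s (Suc n))\<^sup>2 / s\<^sup>2) ^ j)"
proof -
  define a b y where "a = qsym s (Suc (Suc n))" and "b = qsym s n" and "y = qsym s (Suc n)"
  have "qsym_prod s (Suc n) ^ Suc k - qsym_prod s n ^ Suc k = y ^ Suc k * (a ^ Suc k - b ^ Suc k)"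
    unfolding qsym_prod_def a_def b_def y_def by (simp only: power_mult_distrib right_diff_distrib mult.commute)
  also have "\<dots> = y ^ Suc k * ((a - b) * h2 a b k)"
    by (simp only: h2_diff)
  also have "\<dots> = (y * (a - b)) * (y ^ k * h2 a b k)"
    by (simp only: power_Suc mult_ac)
  finally show ?thesis
    unfolding a_def b_def y_def qsym_double qsym_expansion_hmat by (simp only: mult_ac)
qed

lemma qsym_prod_power_hmat: "qsym_prod s n ^ Suc k = s ^ k * (\<Sum>j\<le>k. hmat (s\<^sup>2) k j * sumP s j n)"
proof (induction n)
  case (Suc n)
  then show ?case
    using qsym_prod_power_Suc_diff[of n k]
    by (simp add: sumP_def sum_distrib_left sum.distrib algebra_simps)
qed (simp add: qsym_prod_def sumP_def)

lemma qsym_prod_power_gmat: "1 \<le> k \<Longrightarrow> qsym_prod s n ^ k = s ^ k * (\<Sum>j\<le>k. gmat (s\<^sup>2) k j * sumG s j n)"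
proof (induction n)
  case (Suc n)
  have "qsym_prod s (Suc n) ^ k + qsym_prod s n ^ k
      = s ^ k * (\<Sum>j\<le>k. gmat (s\<^sup>2) k j * ((qsym s (Suc n))\<^sup>2 / s\<^sup>2) ^ j)"
    unfolding qsym_prod_def qsym_expansion_gmat[symmetric] by (simp add: power_mult_distrib algebra_simps)
  then show ?case
    using Suc unfolding sumG_def alternating_sum_Suc[where x = "\<lambda>i. ((qsym s i)\<^sup>2 / s\<^sup>2) ^ _"]
    by (simp add: sum_distrib_left sum_subtractf algebra_simps)
qed (simp add: qsym_prod_def sumG_def)

lemma qsym_sum_prod_power_Suc_diff:
  assumes "1 \<le> k"
  shows "qsym_sum s (Suc n) * qsym_prod s (Suc n) ^ k - qsym_sum s n * qsym_prod s n ^ k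
     = s ^ k * (\<Sum>j\<le>k. cmat s k j * (qsym s (2 * Suc n) * ((qsym s (Suc n))\<^sup>2 / s\<^sup>2) ^ j / qsym s (Suc n)))"
proof -
  obtain p where k: "k = Suc p" using assms by (cases k) auto
  define a b y where "a = qsym s (Suc (Suc n))" and "b = qsym s n" and "y = qsym s (Suc n)"
  have y: "y \<noteq> 0" unfolding y_def using qsym_pos[of "Suc n"] by simp
  have "qsym_sum s (Suc n) * qsym_prod s (Suc n) ^ k - qsym_sum s n * qsym_prod s n ^ k
      = y ^ k * ((a - b) * h2 a b k + y * ((a - b) * h2 a b p))"
    unfolding qsym_sum_def qsym_prod_def a_def[symmetric] b_def[symmetric] y_def[symmetric] h2_diff k
    by (simp add: power_mult_distrib algebra_simps)
  also have "\<dots> = (y * (a - b)) / y * (y ^ k * h2 a b k + y\<^sup>2 * (y ^ p * h2 a b p))"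
    using y by (simp add: k field_simps power2_eq_square)
  also have "\<dots> = qsym s (2 * Suc n) / y * (s ^ k * (\<Sum>j\<le>k. cmat s k j * (y\<^sup>2 / s\<^sup>2) ^ j))"
  proof -
    have "cmat s (Suc p) j = hmat (s\<^sup>2) (Suc p) j + s * (if 1 \<le> j then hmat (s\<^sup>2) p (j - 1) else 0)" for j
      using cmat_eq_hmat[of "Suc p" s j] by simp
    then show ?thesis
      unfolding k qsym_expansion_shift[OF qsym_expansion_hmat[of n, folded a_def b_def y_def]]
      by (simp add: a_def b_def y_def qsym_double)
  qed
  finally show ?thesis
    unfolding y_def by (simp add: sum_distrib_left sum_divide_distrib mult_ac)
qed

lemma qsym_sum_prod_power_cmat:
  "1 \<le> k \<Longrightarrow> qsym_sum s n * qsym_prod s n ^ k = s ^ k * (\<Sum>j\<le>k. cmat s k j * sumQ s j n)"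
proof (induction n)
  case (Suc n)
  then show ?case
    using qsym_sum_prod_power_Suc_diff[OF Suc.prems, of n]
    by (simp add: sumQ_def sum_distrib_left sum.distrib algebra_simps)
qed (simp add: qsym_prod_def sumQ_def)

lemma qsym_sum_prod_power_Suc_add:
  assumes "1 \<le> k"
  shows "qsym_sum s (Suc n) * qsym_prod s (Suc n) ^ (k - 1) + qsym_sum s n * qsym_prod s n ^ (k - 1)
     = s ^ k * (\<Sum>j\<le>k. dmat s k j * (((qsym s (Suc n))\<^sup>2 / s\<^sup>2) ^ j / qsym s (Suc n)))"
proof -
  obtain p where k: "k = Suc p" using assms by (cases k) auto
  define a b y where "a = qsym s (Suc (Suc n))" and "b = qsym s n" and "y = qsym s (Suc n)"
  have y: "y \<noteq> 0" unfolding y_def using qsym_pos[of "Suc n"] by simp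
  have "qsym_sum s (Suc n) * qsym_prod s (Suc n) ^ (k - 1) + qsym_sum s n * qsym_prod s n ^ (k - 1)
      = 1 / y * (y ^ k * (a ^ k + b ^ k) + y\<^sup>2 * (y ^ p * (a ^ p + b ^ p)))"
    unfolding qsym_sum_def qsym_prod_def a_def[symmetric] b_def[symmetric] y_def[symmetric]
    using y by (simp add: k power_mult_distrib field_simps power2_eq_square)
  also have "\<dots> = 1 / y * (s ^ k * (\<Sum>j\<le>k. dmat s k j * (y\<^sup>2 / s\<^sup>2) ^ j))"
  proof -
    have "dmat s (Suc p) j = gmat (s\<^sup>2) (Suc p) j + s * (if 1 \<le> j then gmat (s\<^sup>2) p (j - 1) else 0)" for j
      using dmat_eq_gmat[of "Suc p" s j] by simp
    then show ?thesis
      unfolding k qsym_expansion_shift[OF qsym_expansion_gmat[of n, folded a_def b_def y_def]] by simp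
  qed
  finally show ?thesis
    unfolding y_def by (simp add: sum_distrib_left sum_divide_distrib mult_ac)
qed

lemma qsym_sum_prod_power_dmat:
  "1 \<le> k \<Longrightarrow> qsym_sum s n * qsym_prod s n ^ (k - 1) - (-1) ^ n * (if k = 1 then 1 else 0)
     = s ^ k * (\<Sum>j\<le>k. dmat s k j * sumH s j n)"
proof (induction n)
  case (Suc n)
  have "qsym_sum s (Suc n) * qsym_prod s (Suc n) ^ (k - 1) - (-1) ^ Suc n * (if k = 1 then 1 else 0)
      = - (qsym_sum s n * qsym_prod s n ^ (k - 1) - (-1) ^ n * (if k = 1 then 1 else 0))
        + s ^ k * (\<Sum>j\<le>k. dmat s k j * (((qsym s (Suc n))\<^sup>2 / s\<^sup>2) ^ j / qsym s (Suc n)))"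
    using qsym_sum_prod_power_Suc_add[OF Suc.prems, of n] by (simp add: algebra_simps)
  then show ?case
    unfolding Suc.IH[OF Suc.prems] sumH_def alternating_sum_Suc[where x = "\<lambda>i. ((qsym s i)\<^sup>2 / s\<^sup>2) ^ _ / qsym s i"]
    by (simp add: sum_distrib_left sum_subtractf algebra_simps)
qed (simp add: qsym_prod_def qsym_sum_def sumH_def)

end

context sym_base
begin

lemma qint_sq_power_scaled:
  "i \<le> n \<Longrightarrow> qint (s\<^sup>2) i ^ p * s ^ (p * (n - i)) = s ^ (p * n) * (qsym s i / s) ^ p"
  by (auto simp: qint_sq power_mult_distrib power_divide power_add power_mult[symmetric]
      algebra_simps dest!: le_Suc_ex)

lemma qint_sq_ratio_scaled:
  assumes "i \<le> n"
  shows "qint (s\<^sup>2) (2 * i) / qint (s\<^sup>2) 2 * s ^ (2 * (n - i)) = s ^ (2 * n) / s\<^sup>2 * (qsym s (2 * i) / qsym s 2)"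
proof -
  have "qint (s\<^sup>2) (2 * i) / qint (s\<^sup>2) 2 = s ^ (2 * i) / s\<^sup>2 * (qsym s (2 * i) / qsym s 2)"
    using qsym_pos[of 2] s_ne(1) unfolding qint_sq by (simp add: field_simps)
  moreover have "2 * n = 2 * i + 2 * (n - i)"
    using assms by simp
  then have "s ^ (2 * n) = s ^ (2 * i) * s ^ (2 * (n - i))"
    by (metis power_add)
  ultimately show ?thesis by (simp add: divide_inverse mult_ac)
qed

lemma qsym_div_power_even: "(qsym s i / s) ^ (2 * m) = ((qsym s i)\<^sup>2 / s\<^sup>2) ^ m"
  by (simp only: power_mult power_divide)

lemma qsym_div_power_odd:
  assumes "1 \<le> i" "1 \<le> m"
  shows "(qsym s i / s) ^ (2 * m - 1) = s * (((qsym s i)\<^sup>2 / s\<^sup>2) ^ m / qsym s i)"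
proof -
  obtain p where m: "m = Suc p" using assms(2) by (cases m) auto
  then have "2 * m - 1 = 2 * p + 1" by simp
  then have "(qsym s i / s) ^ (2 * m - 1) = ((qsym s i)\<^sup>2 / s\<^sup>2) ^ p * (qsym s i / s)"
    by (simp only: power_add qsym_div_power_even power_one_right)
  then show ?thesis
    using qsym_pos[OF assms(1)] s_ne(1) by (simp add: m field_simps power2_eq_square)
qed

lemma Ssum_odd_eq: "Ssum (2 * m + 1) n (s\<^sup>2) = s ^ ((2 * m + 2) * n) / (s\<^sup>2 * qsym s 2) * sumP s m n"
proof -
  have split: "s ^ ((2 * m + 2) * k) = s ^ (2 * k) * s ^ (2 * m * k)" for k
    by (simp add: algebra_simps flip: power_add)
  have "qint (s\<^sup>2) (2 * i) / qint (s\<^sup>2) 2 * qint (s\<^sup>2) i ^ (2 * m) * s ^ ((2 * m + 2) * (n - i))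
      = s ^ ((2 * m + 2) * n) / (s\<^sup>2 * qsym s 2) * (qsym s (2 * i) * ((qsym s i)\<^sup>2 / s\<^sup>2) ^ m)"
    if "i \<in> {1..n}" for i
  proof -
    have "qint (s\<^sup>2) (2 * i) / qint (s\<^sup>2) 2 * qint (s\<^sup>2) i ^ (2 * m) * s ^ ((2 * m + 2) * (n - i))
        = (qint (s\<^sup>2) (2 * i) / qint (s\<^sup>2) 2 * s ^ (2 * (n - i))) * (qint (s\<^sup>2) i ^ (2 * m) * s ^ (2 * m * (n - i)))"
      unfolding split by (simp only: mult_ac)
    also have "\<dots> = (s ^ (2 * n) / s\<^sup>2 * (qsym s (2 * i) / qsym s 2)) * (s ^ (2 * m * n) * (qsym s i / s) ^ (2 * m))"
      using that by (simp only: qint_sq_ratio_scaled qint_sq_power_scaled atLeastAtMost_iff)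
    also note qsym_div_power_even
    finally show ?thesis
      unfolding split[of n] by (simp add: divide_inverse mult_ac)
  qed
  then have "(\<Sum>i=1..n. qint (s\<^sup>2) (2 * i) / qint (s\<^sup>2) 2 * qint (s\<^sup>2) i ^ (2 * m) * s ^ ((2 * m + 2) * (n - i)))
      = s ^ ((2 * m + 2) * n) / (s\<^sup>2 * qsym s 2) * sumP s m n"
    unfolding sumP_def sum_distrib_left by (rule sum.cong[OF refl])
  moreover have "sqrt (s\<^sup>2) = s" using s_pos by simp
  ultimately show ?thesis
    unfolding Ssum_def by (simp add: mult.commute)
qed

lemma Ssum_even_eq:
  assumes "1 \<le> m"
  shows "Ssum (2 * m) n (s\<^sup>2) = s ^ ((2 * m + 1) * n) / (s * qsym s 2) * sumQ s m n"
proof -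
  have split: "s ^ ((2 * m + 1) * k) = s ^ (2 * k) * s ^ ((2 * m - 1) * k)" for k
    using assms by (simp add: algebra_simps flip: power_add)
  have "qint (s\<^sup>2) (2 * i) / qint (s\<^sup>2) 2 * qint (s\<^sup>2) i ^ (2 * m - 1) * s ^ ((2 * m + 1) * (n - i))
      = s ^ ((2 * m + 1) * n) / (s * qsym s 2) * (qsym s (2 * i) * ((qsym s i)\<^sup>2 / s\<^sup>2) ^ m / qsym s i)"
    if i: "i \<in> {1..n}" for i
  proof -
    have "qint (s\<^sup>2) (2 * i) / qint (s\<^sup>2) 2 * qint (s\<^sup>2) i ^ (2 * m - 1) * s ^ ((2 * m + 1) * (n - i))
        = (qint (s\<^sup>2) (2 * i) / qint (s\<^sup>2) 2 * s ^ (2 * (n - i)))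
          * (qint (s\<^sup>2) i ^ (2 * m - 1) * s ^ ((2 * m - 1) * (n - i)))"
      unfolding split by (simp only: mult_ac)
    also have "\<dots> = (s ^ (2 * n) / s\<^sup>2 * (qsym s (2 * i) / qsym s 2)) * (s ^ ((2 * m - 1) * n) * (qsym s i / s) ^ (2 * m - 1))"
      using i by (simp only: qint_sq_ratio_scaled qint_sq_power_scaled atLeastAtMost_iff)
    also have "(qsym s i / s) ^ (2 * m - 1) = s * (((qsym s i)\<^sup>2 / s\<^sup>2) ^ m / qsym s i)"
      by (rule qsym_div_power_odd) (use i assms in auto)
    finally show ?thesis
      unfolding split[of n] using s_ne(1) by (simp add: field_simps power2_eq_square)
  qed
  then have "(\<Sum>i=1..n. qint (s\<^sup>2) (2 * i) / qint (s\<^sup>2) 2 * qint (s\<^sup>2) i ^ (2 * m - 1) * s ^ ((2 * m + 1) * (n - i)))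
      = s ^ ((2 * m + 1) * n) / (s * qsym s 2) * sumQ s m n"
    unfolding sumQ_def sum_distrib_left by (rule sum.cong[OF refl])
  moreover have "sqrt (s\<^sup>2) = s" using s_pos by simp
  ultimately show ?thesis
    unfolding Ssum_def using assms by (simp add: mult.commute)
qed

lemma Tsum_even_eq: "Tsum (2 * m) n (s\<^sup>2) = s ^ (2 * m * n) * sumG s m n"
proof -
  have "(-1) ^ (n - i) * qint (s\<^sup>2) i ^ (2 * m) * s ^ (2 * m * (n - i))
      = s ^ (2 * m * n) * ((-1) ^ (n - i) * ((qsym s i)\<^sup>2 / s\<^sup>2) ^ m)" if "i \<in> {1..n}" for i
  proof -
    have "qint (s\<^sup>2) i ^ (2 * m) * s ^ (2 * m * (n - i)) = s ^ (2 * m * n) * ((qsym s i)\<^sup>2 / s\<^sup>2) ^ m"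
      using that by (simp only: qint_sq_power_scaled qsym_div_power_even atLeastAtMost_iff)
    then show ?thesis by (simp only: mult_ac)
  qed
  then have "(\<Sum>i=1..n. (-1) ^ (n - i) * qint (s\<^sup>2) i ^ (2 * m) * s ^ (2 * m * (n - i)))
      = s ^ (2 * m * n) * sumG s m n"
    unfolding sumG_def sum_distrib_left by (rule sum.cong[OF refl])
  moreover have "sqrt (s\<^sup>2) = s" using s_pos by simp
  ultimately show ?thesis
    unfolding Tsum_def by simp
qed

lemma Tsum_odd_eq:
  assumes "1 \<le> m"
  shows "Tsum (2 * m - 1) n (s\<^sup>2) = s ^ ((2 * m - 1) * n) * s * sumH s m n"
proof -
  have "(-1) ^ (n - i) * qint (s\<^sup>2) i ^ (2 * m - 1) * s ^ ((2 * m - 1) * (n - i))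
      = s ^ ((2 * m - 1) * n) * s * ((-1) ^ (n - i) * (((qsym s i)\<^sup>2 / s\<^sup>2) ^ m / qsym s i))"
    if "i \<in> {1..n}" for i
  proof -
    have "qint (s\<^sup>2) i ^ (2 * m - 1) * s ^ ((2 * m - 1) * (n - i))
        = s ^ ((2 * m - 1) * n) * (s * (((qsym s i)\<^sup>2 / s\<^sup>2) ^ m / qsym s i))"
      using that assms by (simp only: qint_sq_power_scaled qsym_div_power_odd atLeastAtMost_iff)
    then show ?thesis by (simp only: mult_ac)
  qed
  then have "(\<Sum>i=1..n. (-1) ^ (n - i) * qint (s\<^sup>2) i ^ (2 * m - 1) * s ^ ((2 * m - 1) * (n - i)))
      = s ^ ((2 * m - 1) * n) * s * sumH s m n"
    unfolding sumH_def sum_distrib_left by (rule sum.cong[OF refl])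
  moreover have "sqrt (s\<^sup>2) = s" using s_pos by simp
  ultimately show ?thesis
    unfolding Tsum_def by simp
qed

end

section \<open>Uniqueness of expansions in powers of \<open>qsym_prod\<close>\<close>

context sym_base
begin

lemma qsym_prod_powers_coeffs_eq:
  assumes "finite A" and "inj_on e A"
    and eq: "\<And>n. 1 \<le> n \<Longrightarrow> (\<Sum>k\<in>A. a k * qsym_prod s n ^ e k) = (\<Sum>k\<in>A. b k * qsym_prod s n ^ e k)"
    and "k \<in> A"
  shows "a k = b k"
proof -
  define p where "p = (\<Sum>k\<in>A. monom (a k - b k) (e k))"
  have "qsym_prod s ` {1..} \<subseteq> {x. poly p x = 0}"
    using eq by (auto simp: p_def poly_sum poly_monom left_diff_distrib sum_subtractf)
  then have "p = 0"
    using infinite_qsym_prod_image poly_roots_finite finite_subset by blast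
  moreover have "coeff p (e k) = a k - b k"
    using assms(1,2,4) by (simp add: p_def coeff_sum coeff_monom inj_on_eq_iff sum.delta' cong: if_cong)
  ultimately show ?thesis by simp
qed

text \<open>Here the sign \<open>(-1)\<^sup>n\<close> cannot be matched by a polynomial in \<open>qsym_prod s n\<close>; squaring and
  \<open>qsym_sum_sq\<close> turn a dependence into a polynomial identity \<open>(1 + c X) P\<^sup>2 = d\<^sup>2\<close>, forcing \<open>P = 0\<close>.\<close>

lemma signed_qsym_sum_coeffs_eq:
  assumes eq: "\<And>n. 1 \<le> n \<Longrightarrow> (-1) ^ n * u + qsym_sum s n * (\<Sum>k\<le>M. a k * qsym_prod s n ^ k)
                              = (-1) ^ n * v + qsym_sum s n * (\<Sum>k\<le>M. b k * qsym_prod s n ^ k)"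
    and "k \<le> M"
  shows "a k = b k"
proof -
  define P where "P = (\<Sum>k\<le>M. monom (a k - b k) k)"
  define c where "c = s + 1 / s + 2"
  define d where "d = v - u"
  define Q where "Q = [:1, c:] * P\<^sup>2 - [:d\<^sup>2:]"
  have c: "c \<noteq> 0" using s_pos unfolding c_def by (simp add: add_pos_pos less_imp_neq[symmetric])
  have "qsym_prod s ` {1..} \<subseteq> {x. poly Q x = 0}"
  proof
    fix x assume "x \<in> qsym_prod s ` {1..}"
    then obtain n where n: "1 \<le> n" and x: "x = qsym_prod s n" by auto
    have "qsym_sum s n * poly P (qsym_prod s n) = (-1) ^ n * d"
      using eq[of n] n by (simp add: P_def d_def poly_sum poly_monom left_diff_distrib sum_subtractf algebra_simps)
    then have "(qsym_sum s n)\<^sup>2 * (poly P (qsym_prod s n))\<^sup>2 = d\<^sup>2"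
      by (simp add: power_mult_distrib[symmetric] power_mult_distrib power_even_eq flip: power_mult)
    then show "x \<in> {x. poly Q x = 0}"
      by (simp add: x Q_def qsym_sum_sq c_def algebra_simps)
  qed
  then have "Q = 0"
    using infinite_qsym_prod_image poly_roots_finite finite_subset by blast
  then have Q: "[:1, c:] * P\<^sup>2 = [:d\<^sup>2:]" by (simp add: Q_def)
  have "P = 0"
  proof (rule ccontr)
    assume "P \<noteq> 0"
    then have "degree ([:1, c:] * P\<^sup>2) = 1 + degree (P\<^sup>2)"
      using c by (subst degree_mult_eq) auto
    then show False unfolding Q by simp
  qed
  then have "coeff P k = 0" by simp
  then show ?thesis using \<open>k \<le> M\<close> by (simp add: P_def coeff_sum)
qed

end

section \<open>The explicit inverses\<close>

lemma neg_one_power_mult_self: "(-1 :: real) ^ j * (-1) ^ j = 1"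
  by (simp flip: power_add)

lemma ltinv_hmat:
  assumes "0 < q" "q \<noteq> 1" "m \<le> k"
  shows "ltinv (hmat q) k m = (-1) ^ (k - m) * qfact q m / qfact q (k + 1) * evp (Pinv k (k - m)) q"
  using assms qfact_pos[OF assms(1,2), of m] qfact_pos[OF assms(1,2), of "Suc k"]
  by (simp add: ltinv_def diag_prod_hmat evp_Pinv field_simps mult.assoc[symmetric] neg_one_power_mult_self)

lemma ltinv_cmat:
  assumes "0 < t" "t \<noteq> 1" "1 \<le> m" "m \<le> k"
  shows "ltinv (cmat t) k m
    = (-1) ^ (k - m) * (1 - t) ^ (k - m + 1) * evp (Qinv k (k - m)) t / (\<Prod>i=0..k-m. 1 - t ^ (2 * (k - i) + 1))"
  using assms by (simp add: ltinv_def diag_prod_cmat evp_Qinv mult.assoc[symmetric] neg_one_power_mult_self)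

lemma ltinv_gmat:
  assumes "1 \<le> m" "m \<le> k"
  shows "ltinv (gmat q) k m = (-1) ^ (k - m) * evp (Ginv k (k - m)) q / (\<Prod>i=0..k-m. 1 + q ^ (k - i))"
  using assms by (simp add: ltinv_def diag_prod_gmat evp_Ginv mult.assoc[symmetric] neg_one_power_mult_self)

lemma ltinv_dmat:
  assumes "1 \<le> m" "m \<le> k"
  shows "ltinv (dmat t) k m = (-1) ^ (k - m) * evp (Hinv k (k - m)) t / diag_prod (dmat t) m k"
  using assms by (simp add: ltinv_def evp_Hinv mult.assoc[symmetric] neg_one_power_mult_self)

context sym_base
begin

lemma qint_sq_prod: "qint (s\<^sup>2) n * qint (s\<^sup>2) (Suc n) = s ^ (2 * n + 1) * qsym_prod s n / s\<^sup>2"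
  unfolding qint_sq qsym_prod_def using s_ne(1) by (simp add: field_simps power_add power2_eq_square mult_2 power_mult)

lemma monomial_eq:
  assumes "k \<le> m"
  shows "(- ((s\<^sup>2) ^ n)) ^ (m - k) * (qint (s\<^sup>2) n * qint (s\<^sup>2) (n + 1)) ^ k
    = (-1) ^ (m - k) * s ^ (2 * m * n) * (qsym_prod s n / s) ^ k"
proof -
  obtain d where m: "m = k + d" using assms le_Suc_ex by blast
  have "(- ((s\<^sup>2) ^ n)) ^ (m - k) = (-1) ^ (m - k) * s ^ (2 * n * d)"
    by (simp add: m power_mult_distrib[symmetric] power_mult)
  moreover have "(qint (s\<^sup>2) n * qint (s\<^sup>2) (n + 1)) ^ k = (s ^ (2 * n) * (qsym_prod s n / s)) ^ k"
    unfolding Suc_eq_plus1[symmetric] qint_sq_prod using s_ne(1) by (simp add: power_add field_simps power2_eq_square)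
  then have "(qint (s\<^sup>2) n * qint (s\<^sup>2) (n + 1)) ^ k = s ^ (2 * n * k) * (qsym_prod s n / s) ^ k"
    by (simp only: power_mult_distrib power_mult)
  ultimately show ?thesis
    by (simp add: m algebra_simps power_add)
qed

end

context sym_base
begin

lemma P_rhs_term:
  assumes "k \<le> m"
  shows "(- ((s\<^sup>2) ^ n)) ^ (m - k) * a / b * x * (qint (s\<^sup>2) n * qint (s\<^sup>2) (n + 1)) ^ (k + 1) / qint (s\<^sup>2) 2
    = s ^ ((2 * m + 2) * n) / (s\<^sup>2 * qsym s 2) * (((-1) ^ (m - k) * a / b * x / s ^ k) * qsym_prod s n ^ (k + 1))"
proof -
  have mono: "(- ((s\<^sup>2) ^ n)) ^ (m - k) * (qint (s\<^sup>2) n * qint (s\<^sup>2) (n + 1)) ^ (k + 1)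
      = (-1) ^ (m - k) * s ^ (2 * m * n) * (qsym_prod s n / s) ^ k * (s ^ (2 * n) * s * qsym_prod s n / s\<^sup>2)"
    using monomial_eq[OF assms, of n] qint_sq_prod[of n] by (simp add: mult.assoc)
  have q2: "qint (s\<^sup>2) 2 = s * qsym s 2"
    using s_ne(1) unfolding qint_sq by (simp add: power2_eq_square)
  have split: "s ^ ((2 * m + 2) * n) = s ^ (2 * m * n) * s ^ (2 * n)"
    by (simp add: algebra_simps flip: power_add)
  have "(- ((s\<^sup>2) ^ n)) ^ (m - k) * a / b * x * (qint (s\<^sup>2) n * qint (s\<^sup>2) (n + 1)) ^ (k + 1) / qint (s\<^sup>2) 2
    = a / b * x * ((- ((s\<^sup>2) ^ n)) ^ (m - k) * (qint (s\<^sup>2) n * qint (s\<^sup>2) (n + 1)) ^ (k + 1)) / qint (s\<^sup>2) 2"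
    by (simp add: divide_inverse mult_ac)
  also have "\<dots> = s ^ ((2 * m + 2) * n) / (s\<^sup>2 * qsym s 2) * (((-1) ^ (m - k) * a / b * x / s ^ k) * qsym_prod s n ^ (k + 1))"
    unfolding mono q2 split using s_ne(1) by (simp add: field_simps power_divide)
  finally show ?thesis .
qed

lemma P_rhs_eq:
  "(\<Sum>k=0..m. (- ((s\<^sup>2) ^ n)) ^ (m - k) * qfact (s\<^sup>2) k / qfact (s\<^sup>2) (m + 1) * e k
      * (qint (s\<^sup>2) n * qint (s\<^sup>2) (n + 1)) ^ (k + 1) / qint (s\<^sup>2) 2)
   = s ^ ((2 * m + 2) * n) / (s\<^sup>2 * qsym s 2)
      * (\<Sum>k=0..m. ((-1) ^ (m - k) * qfact (s\<^sup>2) k / qfact (s\<^sup>2) (m + 1) * e k / s ^ k) * qsym_prod s n ^ (k + 1))"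
  unfolding sum_distrib_left by (intro sum.cong refl P_rhs_term) simp

lemma P_identity:
  "Ssum (2 * m + 1) n (s\<^sup>2) = (\<Sum>k=0..m. (- ((s\<^sup>2) ^ n)) ^ (m - k) * qfact (s\<^sup>2) k / qfact (s\<^sup>2) (m + 1)
      * evp (Pinv m (m - k)) (s\<^sup>2) * (qint (s\<^sup>2) n * qint (s\<^sup>2) (n + 1)) ^ (k + 1) / qint (s\<^sup>2) 2)"
proof -
  have q: "0 < s\<^sup>2" "s\<^sup>2 \<noteq> 1" using s_pos s_ne by auto
  interpret lower_triangular "hmat (s\<^sup>2)" 0 m
    by (rule lower_triangular_hmat[OF q])
  have "sumP s m n = (\<Sum>k=0..m. ltinv (hmat (s\<^sup>2)) m k * (qsym_prod s n ^ (k + 1) / s ^ k))"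
    by (rule solve_lower_triangular) (use s_ne(1) qsym_prod_power_hmat in auto)
  also have "\<dots> = (\<Sum>k=0..m. ((-1) ^ (m - k) * qfact (s\<^sup>2) k / qfact (s\<^sup>2) (m + 1)
      * evp (Pinv m (m - k)) (s\<^sup>2) / s ^ k) * qsym_prod s n ^ (k + 1))"
    by (intro sum.cong refl) (simp add: ltinv_hmat[OF q] neg_one_power_mult_self)
  finally show ?thesis
    unfolding P_rhs_eq Ssum_odd_eq by simp
qed

lemma P_unique:
  assumes "\<And>n. 1 \<le> n \<Longrightarrow> Ssum (2 * m + 1) n (s\<^sup>2) = (\<Sum>k=0..m. (- ((s\<^sup>2) ^ n)) ^ (m - k)
      * qfact (s\<^sup>2) k / qfact (s\<^sup>2) (m + 1) * e k * (qint (s\<^sup>2) n * qint (s\<^sup>2) (n + 1)) ^ (k + 1) / qint (s\<^sup>2) 2)"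
    and "k \<le> m"
  shows "e k = evp (Pinv m (m - k)) (s\<^sup>2)"
proof -
  define w where "w k = (-1) ^ (m - k) * qfact (s\<^sup>2) k / qfact (s\<^sup>2) (m + 1) / s ^ k" for k
  have "w k * e k = w k * evp (Pinv m (m - k)) (s\<^sup>2)"
  proof (rule qsym_prod_powers_coeffs_eq[where A = "{0..m}" and e = Suc
        and a = "\<lambda>k. w k * e k" and b = "\<lambda>k. w k * evp (Pinv m (m - k)) (s\<^sup>2)"])
    fix n :: nat assume "1 \<le> n"
    have "s ^ ((2 * m + 2) * n) / (s\<^sup>2 * qsym s 2) \<noteq> 0"
      using s_ne(1) qsym_pos[of 2] by simp
    then show "(\<Sum>k=0..m. w k * e k * qsym_prod s n ^ Suc k)
        = (\<Sum>k=0..m. w k * evp (Pinv m (m - k)) (s\<^sup>2) * qsym_prod s n ^ Suc k)"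
      using assms(1)[OF \<open>1 \<le> n\<close>] P_identity[of m n]
      unfolding P_rhs_eq w_def by (simp add: mult_ac)
  qed (use assms(2) in auto)
  moreover have "w k \<noteq> 0"
    using qfact_pos[of "s\<^sup>2"] s_ne by (simp add: w_def less_imp_neq[symmetric] s_pos)
  ultimately show ?thesis by simp
qed

end

lemma sym_base_sqrt: "0 < q \<Longrightarrow> q \<noteq> 1 \<Longrightarrow> sym_base (sqrt q)"
  by unfold_locales auto

lemma infinite_pos_ne_1: "infinite {q :: real. 0 < q \<and> q \<noteq> 1}"
proof -
  have "{q :: real. 0 < q \<and> q \<noteq> 1} = {0<..} - {1}" by auto
  then show ?thesis using infinite_Ioi[of "0 :: real"] by (metis finite_Diff2 finite.emptyI finite_insert)
qed

lemma Pfam_eq_Pinv: "Pfam m = Pinv m"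
  unfolding Pfam_def
proof (rule the_equality, goal_cases)
  case 1
  show ?case
  proof (intro conjI allI impI)
    fix n :: nat and q :: real assume "1 \<le> n" "0 < q \<and> q \<noteq> 1"
    then interpret sym_base "sqrt q" using sym_base_sqrt by auto
    show "Ssum (2 * m + 1) n q = (\<Sum>k=0..m. (- (q ^ n)) ^ (m - k) * qfact q k / qfact q (m + 1)
        * evp (Pinv m (m - k)) q * (qint q n * qint q (n + 1)) ^ (k + 1) / qint q 2)"
      using P_identity[of m n] s_pos by simp
  qed (simp add: Pinv_def)
next
  case (2 f)
  show ?case
  proof
    fix j
    show "f j = Pinv m j"
    proof (cases "j \<le> m")
      case True
      show ?thesis
      proof (rule evp_eqI[OF infinite_pos_ne_1])
        fix q :: real assume q: "q \<in> {q. 0 < q \<and> q \<noteq> 1}"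
        then interpret sym_base "sqrt q" using sym_base_sqrt by auto
        have "evp (f (m - (m - j))) ((sqrt q)\<^sup>2) = evp (Pinv m (m - (m - j))) ((sqrt q)\<^sup>2)"
          by (rule P_unique) (use 2 q in auto)
        then show "evp (f j) q = evp (Pinv m j) q" using True q by simp
      qed
    qed (use 2 in \<open>simp add: Pinv_def\<close>)
  qed
qed

lemma inverse_on_hmat:
  assumes "0 < q" "q \<noteq> 1"
  shows "inverse_on 0 n
      (\<lambda>k m. hsym (2 * int m - int k) (int k - int m + 1) q)
      (\<lambda>k m. if m \<le> k then (-1) ^ (k - m) * qfact q m / qfact q (k + 1) * evp (Ppol k (k - m)) q else 0)"
  unfolding hmat_def[symmetric]
  by (rule inverse_on_ltinv[OF lower_triangular_hmat[OF assms]])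
    (simp add: ltinv_hmat[OF assms] Ppol_def Pfam_eq_Pinv ltinv_above_diag)

lemma one_minus_power_nonzero: "0 \<le> t \<Longrightarrow> t \<noteq> 1 \<Longrightarrow> 0 < j \<Longrightarrow> 1 - t ^ j \<noteq> (0 :: real)"
  using power_eq_iff_eq_base[of j t 1] by simp

context sym_base
begin

lemma Q_rhs_term:
  assumes "k \<le> m"
  shows "(1 - s ^ (2 * n + 1)) * ((- ((s\<^sup>2) ^ n)) ^ (m - k) * (1 - s) ^ (m - k) * x / p
      * (qint (s\<^sup>2) n * qint (s\<^sup>2) (n + 1)) ^ k / qint (s\<^sup>2) 2)
    = s ^ ((2 * m + 1) * n) / (s * qsym s 2) * qsym_sum s n
      * (((-1) ^ (m - k) * (1 - s) ^ (m - k + 1) * x / p / s ^ k) * qsym_prod s n ^ k)"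
proof -
  have q2: "qint (s\<^sup>2) 2 = s * qsym s 2"
    using s_ne(1) unfolding qint_sq by (simp add: power2_eq_square)
  have odd: "1 - s ^ (2 * n + 1) = (1 - s) * (s ^ n * qsym_sum s n)"
    using odd_power_quotient[of n] s_ne_1 by (simp add: field_simps)
  have "(1 - s ^ (2 * n + 1)) * ((- ((s\<^sup>2) ^ n)) ^ (m - k) * (1 - s) ^ (m - k) * x / p
      * (qint (s\<^sup>2) n * qint (s\<^sup>2) (n + 1)) ^ k / qint (s\<^sup>2) 2)
    = (1 - s ^ (2 * n + 1)) * ((1 - s) ^ (m - k) * x / p
      * ((- ((s\<^sup>2) ^ n)) ^ (m - k) * (qint (s\<^sup>2) n * qint (s\<^sup>2) (n + 1)) ^ k)) / qint (s\<^sup>2) 2"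
    by (simp add: divide_inverse mult_ac)
  also have "\<dots> = ((1 - s) * (s ^ n * qsym_sum s n)) * ((1 - s) ^ (m - k) * x / p
      * ((-1) ^ (m - k) * s ^ (2 * m * n) * (qsym_prod s n / s) ^ k)) / (s * qsym s 2)"
    by (simp only: monomial_eq[OF assms] odd q2)
  also have "((1 - s) * (s ^ n * qsym_sum s n)) * ((1 - s) ^ (m - k) * x / p
      * ((-1) ^ (m - k) * s ^ (2 * m * n) * (qsym_prod s n / s) ^ k)) / (s * qsym s 2)
    = s ^ ((2 * m + 1) * n) / (s * qsym s 2) * qsym_sum s n
      * (((-1) ^ (m - k) * (1 - s) ^ (m - k + 1) * x / p / s ^ k) * qsym_prod s n ^ k)"
    by (simp add: power_divide divide_inverse mult_ac power_add power_mult_distrib power_inverse)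
  finally show ?thesis .
qed

lemma Q_rhs_eq:
  "(1 - s ^ (2 * n + 1)) * (\<Sum>k=0..m. (- ((s\<^sup>2) ^ n)) ^ (m - k) * (1 - s) ^ (m - k) * e k
      / (\<Prod>i=0..m-k. 1 - s ^ (2 * (m - i) + 1)) * (qint (s\<^sup>2) n * qint (s\<^sup>2) (n + 1)) ^ k / qint (s\<^sup>2) 2)
   = s ^ ((2 * m + 1) * n) / (s * qsym s 2) * qsym_sum s n
      * (\<Sum>k=0..m. ((-1) ^ (m - k) * (1 - s) ^ (m - k + 1) * e k / (\<Prod>i=0..m-k. 1 - s ^ (2 * (m - i) + 1))
          / s ^ k) * qsym_prod s n ^ k)"
  unfolding sum_distrib_left by (intro sum.cong refl Q_rhs_term) simp

lemma Q_identity: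
  assumes "1 \<le> m"
  shows "Ssum (2 * m) n (s\<^sup>2) = (1 - s ^ (2 * n + 1)) * (\<Sum>k=0..m. (- ((s\<^sup>2) ^ n)) ^ (m - k) * (1 - s) ^ (m - k)
      * evp (Qinv m (m - k)) s / (\<Prod>i=0..m-k. 1 - s ^ (2 * (m - i) + 1))
      * (qint (s\<^sup>2) n * qint (s\<^sup>2) (n + 1)) ^ k / qint (s\<^sup>2) 2)"
proof -
  define c where "c k = (-1) ^ (m - k) * (1 - s) ^ (m - k + 1) * evp (Qinv m (m - k)) s
    / (\<Prod>i=0..m-k. 1 - s ^ (2 * (m - i) + 1)) / s ^ k" for k
  interpret lower_triangular "cmat s" 1 m
    by (rule lower_triangular_cmat[OF s_pos s_ne_1])
  have "sumQ s m n = (\<Sum>k=1..m. ltinv (cmat s) m k * (qsym_sum s n * qsym_prod s n ^ k / s ^ k))"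
    by (rule solve_lower_triangular) (use assms s_ne(1) qsym_sum_prod_power_cmat cmat_col_0 in auto)
  also have "\<dots> = qsym_sum s n * (\<Sum>k=1..m. c k * qsym_prod s n ^ k)"
    unfolding sum_distrib_left c_def
    by (intro sum.cong refl) (simp add: ltinv_cmat[OF s_pos s_ne_1] mult_ac)
  also have "(\<Sum>k=1..m. c k * qsym_prod s n ^ k) = (\<Sum>k=0..m. c k * qsym_prod s n ^ k)"
    by (subst sum.atLeast_Suc_atMost[of 0 m]) (simp_all add: c_def Qinv_def)
  finally show ?thesis
    unfolding Q_rhs_eq Ssum_even_eq[OF assms] c_def by (simp add: mult_ac)
qed

lemma Q_unique:
  assumes "1 \<le> m"
    and "\<And>n. 1 \<le> n \<Longrightarrow> Ssum (2 * m) n (s\<^sup>2) = (1 - s ^ (2 * n + 1)) * (\<Sum>k=0..m. (- ((s\<^sup>2) ^ n)) ^ (m - k)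
      * (1 - s) ^ (m - k) * e k / (\<Prod>i=0..m-k. 1 - s ^ (2 * (m - i) + 1))
      * (qint (s\<^sup>2) n * qint (s\<^sup>2) (n + 1)) ^ k / qint (s\<^sup>2) 2)"
    and "k \<le> m"
  shows "e k = evp (Qinv m (m - k)) s"
proof -
  define w where "w k = (-1) ^ (m - k) * (1 - s) ^ (m - k + 1) / (\<Prod>i=0..m-k. 1 - s ^ (2 * (m - i) + 1)) / s ^ k"
    for k
  have "w k * e k = w k * evp (Qinv m (m - k)) s"
  proof (rule qsym_prod_powers_coeffs_eq[where A = "{0..m}" and e = id
        and a = "\<lambda>k. w k * e k" and b = "\<lambda>k. w k * evp (Qinv m (m - k)) s"])
    fix n :: nat assume "1 \<le> n"
    have "s ^ ((2 * m + 1) * n) / (s * qsym s 2) * qsym_sum s n \<noteq> 0"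
      using s_ne(1) qsym_pos[of 2] qsym_sum_pos[OF \<open>1 \<le> n\<close>] by simp
    then show "(\<Sum>k=0..m. w k * e k * qsym_prod s n ^ id k)
        = (\<Sum>k=0..m. w k * evp (Qinv m (m - k)) s * qsym_prod s n ^ id k)"
      using assms(2)[OF \<open>1 \<le> n\<close>] Q_identity[OF assms(1), of n]
      unfolding Q_rhs_eq w_def by (simp add: mult_ac)
  qed (use assms(3) in auto)
  moreover have "w k \<noteq> 0"
    using s_ne(1) s_ne_1 s_pos one_minus_power_nonzero[of s]
    by (simp add: w_def prod_zero_iff del: power_Suc)
  ultimately show ?thesis by simp
qed

end

lemma Qfam_eq_Qinv: "1 \<le> m \<Longrightarrow> Qfam m = Qinv m"
  unfolding Qfam_def
proof (rule the_equality, goal_cases)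
  case 1
  show ?case
  proof (intro conjI allI impI)
    fix n :: nat and q :: real assume "1 \<le> n" "0 < q \<and> q \<noteq> 1"
    then interpret sym_base "sqrt q" using sym_base_sqrt by auto
    show "Ssum (2 * m) n q = (1 - sqrt q ^ (2 * n + 1)) * (\<Sum>k=0..m. (- (q ^ n)) ^ (m - k)
        * (1 - sqrt q) ^ (m - k) * evp (Qinv m (m - k)) (sqrt q) / (\<Prod>i=0..m-k. 1 - sqrt q ^ (2 * (m - i) + 1))
        * (qint q n * qint q (n + 1)) ^ k / qint q 2)"
      using Q_identity[OF 1, of n] s_pos by simp
  qed (simp add: Qinv_def)
next
  case (2 f)
  show ?case
  proof
    fix j
    show "f j = Qinv m j"
    proof (cases "j \<le> m")
      case True
      show ?thesis
      proof (rule evp_eqI[OF infinite_pos_ne_1])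
        fix t :: real assume t: "t \<in> {q. 0 < q \<and> q \<noteq> 1}"
        then interpret sym_base t by unfold_locales auto
        have "evp (f (m - (m - j))) t = evp (Qinv m (m - (m - j))) t"
          by (rule Q_unique[OF 2(1)]) (use 2(2) t s_ne in auto)
        then show "evp (f j) t = evp (Qinv m j) t" using True by simp
      qed
    qed (use 2 in \<open>simp add: Qinv_def\<close>)
  qed
qed

lemma inverse_on_cmat:
  assumes "0 < q" "q \<noteq> 1"
  shows "inverse_on 1 n
      (\<lambda>k m. cpol (int k) (int m) q)
      (\<lambda>k m. if m \<le> k then (-1) ^ (k - m) * (1 - q) ^ (k - m + 1) * evp (Qpol k (k - m)) q
                 / (\<Prod>i=0..k-m. 1 - q ^ (2 * k - 2 * i + 1)) else 0)"
proof -
  have "(\<Prod>i=0..k-m. 1 - q ^ (2 * k - 2 * i + 1)) = (\<Prod>i=0..k-m. 1 - q ^ (2 * (k - i) + 1))" for k m :: nat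
    by (intro prod.cong refl) (simp add: diff_mult_distrib2)
  then show ?thesis
    unfolding cmat_def[symmetric]
    by (intro inverse_on_ltinv[OF lower_triangular_cmat[OF assms]])
      (simp add: ltinv_cmat[OF assms] Qpol_def Qfam_eq_Qinv ltinv_above_diag)
qed

context sym_base
begin

lemma G_rhs_term:
  assumes "k \<le> m"
  shows "(- ((s\<^sup>2) ^ n)) ^ (m - k) * x / p * (qint (s\<^sup>2) n * qint (s\<^sup>2) (n + 1)) ^ k
    = s ^ (2 * m * n) * (((-1) ^ (m - k) * x / p / s ^ k) * qsym_prod s n ^ k)"
proof -
  have "(- ((s\<^sup>2) ^ n)) ^ (m - k) * x / p * (qint (s\<^sup>2) n * qint (s\<^sup>2) (n + 1)) ^ k
      = x / p * ((- ((s\<^sup>2) ^ n)) ^ (m - k) * (qint (s\<^sup>2) n * qint (s\<^sup>2) (n + 1)) ^ k)"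
    by (simp add: divide_inverse mult_ac)
  also have "\<dots> = x / p * ((-1) ^ (m - k) * s ^ (2 * m * n) * (qsym_prod s n / s) ^ k)"
    by (simp only: monomial_eq[OF assms])
  also have "\<dots> = s ^ (2 * m * n) * (((-1) ^ (m - k) * x / p / s ^ k) * qsym_prod s n ^ k)"
    by (simp add: power_divide)
  finally show ?thesis .
qed

lemma G_rhs_eq:
  "(\<Sum>k=1..m. (- ((s\<^sup>2) ^ n)) ^ (m - k) * e k / (\<Prod>i=0..m-k. 1 + (s\<^sup>2) ^ (m - i))
      * (qint (s\<^sup>2) n * qint (s\<^sup>2) (n + 1)) ^ k)
   = s ^ (2 * m * n) * (\<Sum>k=1..m. ((-1) ^ (m - k) * e k / (\<Prod>i=0..m-k. 1 + (s\<^sup>2) ^ (m - i)) / s ^ k)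
      * qsym_prod s n ^ k)"
  unfolding sum_distrib_left by (intro sum.cong refl G_rhs_term) simp

lemma G_identity:
  assumes "1 \<le> m"
  shows "Tsum (2 * m) n (s\<^sup>2) = (\<Sum>k=1..m. (- ((s\<^sup>2) ^ n)) ^ (m - k) * evp (Ginv m (m - k)) (s\<^sup>2)
      / (\<Prod>i=0..m-k. 1 + (s\<^sup>2) ^ (m - i)) * (qint (s\<^sup>2) n * qint (s\<^sup>2) (n + 1)) ^ k)"
proof -
  interpret lower_triangular "gmat (s\<^sup>2)" 1 m
    using lower_triangular_gmat s_pos by simp
  have "sumG s m n = (\<Sum>k=1..m. ltinv (gmat (s\<^sup>2)) m k * (qsym_prod s n ^ k / s ^ k))"
    by (rule solve_lower_triangular) (use assms s_ne(1) qsym_prod_power_gmat gmat_col_0 in auto)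
  also have "\<dots> = (\<Sum>k=1..m. ((-1) ^ (m - k) * evp (Ginv m (m - k)) (s\<^sup>2)
      / (\<Prod>i=0..m-k. 1 + (s\<^sup>2) ^ (m - i)) / s ^ k) * qsym_prod s n ^ k)"
    by (intro sum.cong refl) (simp add: ltinv_gmat)
  finally show ?thesis
    unfolding G_rhs_eq Tsum_even_eq by simp
qed

lemma G_unique:
  assumes "1 \<le> m"
    and "\<And>n. 1 \<le> n \<Longrightarrow> Tsum (2 * m) n (s\<^sup>2) = (\<Sum>k=1..m. (- ((s\<^sup>2) ^ n)) ^ (m - k) * e k
      / (\<Prod>i=0..m-k. 1 + (s\<^sup>2) ^ (m - i)) * (qint (s\<^sup>2) n * qint (s\<^sup>2) (n + 1)) ^ k)"
    and "1 \<le> k" "k \<le> m"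
  shows "e k = evp (Ginv m (m - k)) (s\<^sup>2)"
proof -
  define w where "w k = (-1) ^ (m - k) / (\<Prod>i=0..m-k. 1 + (s\<^sup>2) ^ (m - i)) / s ^ k" for k
  have "w k * e k = w k * evp (Ginv m (m - k)) (s\<^sup>2)"
  proof (rule qsym_prod_powers_coeffs_eq[where A = "{1..m}" and e = id
        and a = "\<lambda>k. w k * e k" and b = "\<lambda>k. w k * evp (Ginv m (m - k)) (s\<^sup>2)"])
    fix n :: nat assume "1 \<le> n"
    then show "(\<Sum>k=1..m. w k * e k * qsym_prod s n ^ id k)
        = (\<Sum>k=1..m. w k * evp (Ginv m (m - k)) (s\<^sup>2) * qsym_prod s n ^ id k)"
      using assms(2)[OF \<open>1 \<le> n\<close>] G_identity[OF assms(1), of n] s_ne(1)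
      unfolding G_rhs_eq w_def by (simp add: mult_ac)
  qed (use assms(3,4) in auto)
  moreover have "1 + (s\<^sup>2) ^ j \<noteq> 0" for j
  proof -
    have "0 \<le> (s\<^sup>2) ^ j" by simp
    then show ?thesis by linarith
  qed
  then have "w k \<noteq> 0"
    using s_ne(1) by (simp add: w_def)
  ultimately show ?thesis by simp
qed

end

lemma Gfam_eq_Ginv: "1 \<le> m \<Longrightarrow> Gfam m = Ginv m"
  unfolding Gfam_def
proof (rule the_equality, goal_cases)
  case 1
  show ?case
  proof (intro conjI allI impI)
    fix n :: nat and q :: real assume "1 \<le> n" "0 < q \<and> q \<noteq> 1"
    then interpret sym_base "sqrt q" using sym_base_sqrt by auto
    show "Tsum (2 * m) n q = (\<Sum>k=1..m. (- (q ^ n)) ^ (m - k) * evp (Ginv m (m - k)) q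
        / (\<Prod>i=0..m-k. 1 + q ^ (m - i)) * (qint q n * qint q (n + 1)) ^ k)"
      using G_identity[OF 1, of n] s_pos by simp
  qed (simp add: Ginv_def)
next
  case (2 f)
  show ?case
  proof
    fix j
    show "f j = Ginv m j"
    proof (cases "j < m")
      case True
      show ?thesis
      proof (rule evp_eqI[OF infinite_pos_ne_1])
        fix q :: real assume q: "q \<in> {q. 0 < q \<and> q \<noteq> 1}"
        then interpret sym_base "sqrt q" using sym_base_sqrt by auto
        have "evp (f (m - (m - j))) ((sqrt q)\<^sup>2) = evp (Ginv m (m - (m - j))) ((sqrt q)\<^sup>2)"
          by (rule G_unique[OF 2(1)]) (use 2(2) q True in auto)
        then show "evp (f j) q = evp (Ginv m j) q" using True q by simp
      qed
    qed (use 2 in \<open>simp add: Ginv_def\<close>)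
  qed
qed

lemma inverse_on_gmat:
  assumes "0 < q"
  shows "inverse_on 1 n
      (\<lambda>k m. gpol (int k) (int m) q)
      (\<lambda>k m. if m \<le> k then (-1) ^ (k - m) * evp (Gpol k (k - m)) q / (\<Prod>i=0..k-m. 1 + q ^ (k - i)) else 0)"
  unfolding gmat_def[symmetric]
  by (rule inverse_on_ltinv[OF lower_triangular_gmat[OF assms]])
    (simp add: ltinv_gmat Gpol_def Gfam_eq_Ginv ltinv_above_diag)

context sym_base
begin

lemma H_rhs_term:
  assumes "1 \<le> k" "k \<le> m"
  shows "(- ((s\<^sup>2) ^ n)) ^ (m - k) * x * (qint (s\<^sup>2) n * qint (s\<^sup>2) (n + 1)) ^ (k - 1)
      / ((1 + s) ^ (m - k + 1) * (\<Prod>i=0..m-k. 1 + s ^ (2 * (m - i) - 1)))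
    = s ^ (2 * (m - 1) * n) * (((-1) ^ (m - k) * x / diag_prod (dmat s) k m / s ^ (k - 1)) * qsym_prod s n ^ (k - 1))"
proof -
  have "k - 1 \<le> m - 1" "m - 1 - (k - 1) = m - k" using assms by auto
  then have "(- ((s\<^sup>2) ^ n)) ^ (m - k) * (qint (s\<^sup>2) n * qint (s\<^sup>2) (n + 1)) ^ (k - 1)
      = (-1) ^ (m - k) * s ^ (2 * (m - 1) * n) * (qsym_prod s n / s) ^ (k - 1)"
    using monomial_eq[of "k - 1" "m - 1" n] by simp
  then show ?thesis
    using assms
    by (simp add: diag_prod_dmat power_divide divide_inverse mult_ac power_mult_distrib power_inverse)
qed

lemma H_rhs_eq:
  assumes "1 \<le> m"
  shows "(-1) ^ (m + n) * e 1 * s ^ ((2 * m - 1) * n) / ((1 + s) ^ m * (\<Prod>i=0..m-1. 1 + s ^ (2 * (m - i) - 1)))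
    + (1 - s ^ (2 * n + 1)) / (1 - s) * (\<Sum>k=1..m. (- ((s\<^sup>2) ^ n)) ^ (m - k) * e k
        * (qint (s\<^sup>2) n * qint (s\<^sup>2) (n + 1)) ^ (k - 1)
        / ((1 + s) ^ (m - k + 1) * (\<Prod>i=0..m-k. 1 + s ^ (2 * (m - i) - 1))))
  = s ^ ((2 * m - 1) * n) * ((-1) ^ n * ((-1) ^ m * e 1 / diag_prod (dmat s) 1 m)
      + qsym_sum s n * (\<Sum>k=1..m. ((-1) ^ (m - k) * e k / diag_prod (dmat s) k m / s ^ (k - 1))
          * qsym_prod s n ^ (k - 1)))"
proof -
  have split: "s ^ ((2 * m - 1) * n) = s ^ n * s ^ (2 * (m - 1) * n)"
    using assms by (cases m) (simp_all add: algebra_simps flip: power_add)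
  have "(\<Sum>k=1..m. (- ((s\<^sup>2) ^ n)) ^ (m - k) * e k * (qint (s\<^sup>2) n * qint (s\<^sup>2) (n + 1)) ^ (k - 1)
        / ((1 + s) ^ (m - k + 1) * (\<Prod>i=0..m-k. 1 + s ^ (2 * (m - i) - 1))))
      = s ^ (2 * (m - 1) * n) * (\<Sum>k=1..m. ((-1) ^ (m - k) * e k / diag_prod (dmat s) k m / s ^ (k - 1))
          * qsym_prod s n ^ (k - 1))"
    unfolding sum_distrib_left by (intro sum.cong refl H_rhs_term) simp_all
  then have "(1 - s ^ (2 * n + 1)) / (1 - s) * (\<Sum>k=1..m. (- ((s\<^sup>2) ^ n)) ^ (m - k) * e k
        * (qint (s\<^sup>2) n * qint (s\<^sup>2) (n + 1)) ^ (k - 1)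
        / ((1 + s) ^ (m - k + 1) * (\<Prod>i=0..m-k. 1 + s ^ (2 * (m - i) - 1))))
      = s ^ ((2 * m - 1) * n) * (qsym_sum s n * (\<Sum>k=1..m. ((-1) ^ (m - k) * e k / diag_prod (dmat s) k m
          / s ^ (k - 1)) * qsym_prod s n ^ (k - 1)))"
    unfolding odd_power_quotient split by (simp only: mult_ac)
  moreover have "(-1) ^ (m + n) * e 1 * s ^ ((2 * m - 1) * n) / ((1 + s) ^ m * (\<Prod>i=0..m-1. 1 + s ^ (2 * (m - i) - 1)))
      = s ^ ((2 * m - 1) * n) * ((-1) ^ n * ((-1) ^ m * e 1 / diag_prod (dmat s) 1 m))"
    using assms by (simp add: diag_prod_dmat power_add mult_ac)
  ultimately show ?thesis by (simp add: distrib_left)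
qed

lemma H_identity:
  assumes "1 \<le> m"
  shows "Tsum (2 * m - 1) n (s\<^sup>2) = (-1) ^ (m + n) * evp (Hinv m (m - 1)) s * s ^ ((2 * m - 1) * n)
      / ((1 + s) ^ m * (\<Prod>i=0..m-1. 1 + s ^ (2 * (m - i) - 1)))
    + (1 - s ^ (2 * n + 1)) / (1 - s) * (\<Sum>k=1..m. (- ((s\<^sup>2) ^ n)) ^ (m - k) * evp (Hinv m (m - k)) s
        * (qint (s\<^sup>2) n * qint (s\<^sup>2) (n + 1)) ^ (k - 1)
        / ((1 + s) ^ (m - k + 1) * (\<Prod>i=0..m-k. 1 + s ^ (2 * (m - i) - 1))))"
proof -
  define B where "B k = ltinv (dmat s) m k" for k
  define c where "c k = (-1) ^ (m - k) * evp (Hinv m (m - k)) s / diag_prod (dmat s) k m / s ^ (k - 1)" for k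
  interpret lower_triangular "dmat s" 1 m
    by (rule lower_triangular_dmat[OF s_pos])
  have B: "B k = (-1) ^ (m - k) * evp (Hinv m (m - k)) s / diag_prod (dmat s) k m" if "k \<in> {1..m}" for k
    using that by (simp add: B_def ltinv_dmat)
  have "sumH s m n = (\<Sum>k=1..m. B k
      * ((qsym_sum s n * qsym_prod s n ^ (k - 1) - (-1) ^ n * (if k = 1 then 1 else 0)) / s ^ k))"
    unfolding B_def
    by (rule solve_lower_triangular) (use assms s_ne(1) qsym_sum_prod_power_dmat dmat_col_0 in auto)
  also have "\<dots> = (\<Sum>k=1..m. qsym_sum s n * (c k * qsym_prod s n ^ (k - 1)) / s)
      - (\<Sum>k=1..m. (if k = 1 then (-1) ^ n * B 1 / s else 0))"
    unfolding sum_subtractf[symmetric]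
  proof (rule sum.cong[OF refl])
    fix k assume k: "k \<in> {1..m}"
    then have "s ^ k = s * s ^ (k - 1)" by (cases k) auto
    then show "B k * ((qsym_sum s n * qsym_prod s n ^ (k - 1) - (-1) ^ n * (if k = 1 then 1 else 0)) / s ^ k)
        = qsym_sum s n * (c k * qsym_prod s n ^ (k - 1)) / s - (if k = 1 then (-1) ^ n * B 1 / s else 0)"
      using k s_ne(1) diag_prod_nonzero[of 1 m] by (cases "k = 1") (simp_all add: B c_def field_simps)
  qed
  also have "(\<Sum>k=1..m. (if k = 1 then (-1) ^ n * B 1 / s else 0)) = (-1) ^ n * B 1 / s"
    using assms by simp
  also have "B 1 = - ((-1) ^ m * evp (Hinv m (m - 1)) s / diag_prod (dmat s) 1 m)"
    using assms B[of 1] by (cases m) simp_all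
  finally have "s * sumH s m n = (-1) ^ n * ((-1) ^ m * evp (Hinv m (m - 1)) s / diag_prod (dmat s) 1 m)
      + qsym_sum s n * (\<Sum>k=1..m. c k * qsym_prod s n ^ (k - 1))"
    using s_ne(1) by (simp add: sum_divide_distrib[symmetric] sum_distrib_left field_simps mult.left_commute)
  then show ?thesis
    unfolding H_rhs_eq[OF assms, of n "\<lambda>k. evp (Hinv m (m - k)) s"] Tsum_odd_eq[OF assms] c_def
    by (simp add: mult.assoc)
qed

lemma H_unique:
  assumes "1 \<le> m"
    and "\<And>n. 1 \<le> n \<Longrightarrow> Tsum (2 * m - 1) n (s\<^sup>2) = (-1) ^ (m + n) * e 1 * s ^ ((2 * m - 1) * n)
      / ((1 + s) ^ m * (\<Prod>i=0..m-1. 1 + s ^ (2 * (m - i) - 1)))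
    + (1 - s ^ (2 * n + 1)) / (1 - s) * (\<Sum>k=1..m. (- ((s\<^sup>2) ^ n)) ^ (m - k) * e k
        * (qint (s\<^sup>2) n * qint (s\<^sup>2) (n + 1)) ^ (k - 1)
        / ((1 + s) ^ (m - k + 1) * (\<Prod>i=0..m-k. 1 + s ^ (2 * (m - i) - 1))))"
    and "1 \<le> k" "k \<le> m"
  shows "e k = evp (Hinv m (m - k)) s"
proof -
  define h where "h k = evp (Hinv m (m - k)) s" for k
  define w where "w k = (-1) ^ (m - k) / diag_prod (dmat s) k m / s ^ (k - 1)" for k
  interpret lower_triangular "dmat s" 1 m
    by (rule lower_triangular_dmat[OF s_pos])
  have shift: "(\<Sum>k=1..m. g k) = (\<Sum>j\<le>m - 1. g (Suc j))" for g :: "nat \<Rightarrow> real"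
    using assms(1) sum.shift_bounds_cl_Suc_ivl[of g 0 "m - 1"] by (simp add: atLeast0AtMost)
  have "w (Suc (k - 1)) * e (Suc (k - 1)) = w (Suc (k - 1)) * h (Suc (k - 1))"
  proof (rule signed_qsym_sum_coeffs_eq[where M = "m - 1" and u = "(-1) ^ m * e 1 / diag_prod (dmat s) 1 m"
        and v = "(-1) ^ m * h 1 / diag_prod (dmat s) 1 m"
        and a = "\<lambda>j. w (Suc j) * e (Suc j)" and b = "\<lambda>j. w (Suc j) * h (Suc j)"])
    fix n :: nat assume "1 \<le> n"
    have "s ^ ((2 * m - 1) * n) * ((-1) ^ n * ((-1) ^ m * e 1 / diag_prod (dmat s) 1 m)
          + qsym_sum s n * (\<Sum>k=1..m. ((-1) ^ (m - k) * e k / diag_prod (dmat s) k m / s ^ (k - 1))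
            * qsym_prod s n ^ (k - 1)))
        = s ^ ((2 * m - 1) * n) * ((-1) ^ n * ((-1) ^ m * h 1 / diag_prod (dmat s) 1 m)
          + qsym_sum s n * (\<Sum>k=1..m. ((-1) ^ (m - k) * h k / diag_prod (dmat s) k m / s ^ (k - 1))
            * qsym_prod s n ^ (k - 1)))"
      using assms(2)[OF \<open>1 \<le> n\<close>] H_identity[OF assms(1), of n]
      unfolding H_rhs_eq[OF assms(1), of n e] H_rhs_eq[OF assms(1), of n h, unfolded h_def] h_def
      by simp
    then show "(-1) ^ n * ((-1) ^ m * e 1 / diag_prod (dmat s) 1 m)
          + qsym_sum s n * (\<Sum>j\<le>m - 1. w (Suc j) * e (Suc j) * qsym_prod s n ^ j)
        = (-1) ^ n * ((-1) ^ m * h 1 / diag_prod (dmat s) 1 m)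
          + qsym_sum s n * (\<Sum>j\<le>m - 1. w (Suc j) * h (Suc j) * qsym_prod s n ^ j)"
      using s_ne(1) unfolding shift w_def by (simp add: mult_ac)
  qed (use assms(4) in auto)
  moreover have "w k \<noteq> 0"
    using assms(3,4) s_ne(1) diag_prod_nonzero[of k m] by (simp add: w_def)
  ultimately show ?thesis
    using assms(3) by (simp add: h_def)
qed

end

lemma Hfam_eq_Hinv: "1 \<le> m \<Longrightarrow> Hfam m = Hinv m"
  unfolding Hfam_def
proof (rule the_equality, goal_cases)
  case 1
  show ?case
  proof (intro conjI allI impI)
    fix n :: nat and q :: real assume "1 \<le> n" "0 < q \<and> q \<noteq> 1"
    then interpret sym_base "sqrt q" using sym_base_sqrt by auto
    show "Tsum (2 * m - 1) n q = (-1) ^ (m + n) * evp (Hinv m (m - 1)) (sqrt q) * sqrt q ^ ((2 * m - 1) * n)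
        / ((1 + sqrt q) ^ m * (\<Prod>i=0..m-1. 1 + sqrt q ^ (2 * (m - i) - 1)))
      + (1 - sqrt q ^ (2 * n + 1)) / (1 - sqrt q) * (\<Sum>k=1..m. (- (q ^ n)) ^ (m - k)
        * evp (Hinv m (m - k)) (sqrt q) * (qint q n * qint q (n + 1)) ^ (k - 1)
        / ((1 + sqrt q) ^ (m - k + 1) * (\<Prod>i=0..m-k. 1 + sqrt q ^ (2 * (m - i) - 1))))"
      using H_identity[OF 1, of n] s_pos by simp
  qed (simp add: Hinv_def)
next
  case (2 f)
  show ?case
  proof
    fix j
    show "f j = Hinv m j"
    proof (cases "j < m")
      case True
      show ?thesis
      proof (rule evp_eqI[OF infinite_pos_ne_1])
        fix t :: real assume t: "t \<in> {q. 0 < q \<and> q \<noteq> 1}"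
        then interpret sym_base t by unfold_locales auto
        have "evp (f (m - (m - j))) t = evp (Hinv m (m - (m - j))) t"
          by (rule H_unique[OF 2(1)]) (use 2(2) t True s_ne in auto)
        then show "evp (f j) t = evp (Hinv m j) t" using True by simp
      qed
    qed (use 2 in \<open>simp add: Hinv_def\<close>)
  qed
qed

lemma inverse_on_dmat:
  assumes "0 < q"
  shows "inverse_on 1 n
      (\<lambda>k m. dpol (int k) (int m) q)
      (\<lambda>k m. if m \<le> k then (-1) ^ (k - m) * evp (Hpol k (k - m)) q
                 / ((1 + q) ^ (k - m + 1) * (\<Prod>i=0..k-m. 1 + q ^ (2 * k - 2 * i - 1))) else 0)"
proof -
  have "(\<Prod>i=0..k-m. 1 + q ^ (2 * k - 2 * i - 1)) = (\<Prod>i=0..k-m. 1 + q ^ (2 * (k - i) - 1))" for k m :: nat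
    by (intro prod.cong refl) (simp add: diff_mult_distrib2)
  then show ?thesis
    unfolding dmat_def[symmetric]
    by (intro inverse_on_ltinv[OF lower_triangular_dmat[OF assms]])
      (simp add: ltinv_dmat diag_prod_dmat Hpol_def Hfam_eq_Hinv ltinv_above_diag)
qed

theorem theorem2p3:
  fixes n :: nat and q :: real
  assumes "n \<ge> 1" and "0 < q" and "q \<noteq> 1"
  shows
   "inverse_on 0 n
      (\<lambda>k m. hsym (2 * int m - int k) (int k - int m + 1) q)
      (\<lambda>k m. if m \<le> k then (-1) ^ (k - m) * qfact q m / qfact q (k+1) * evp (Ppol k (k - m)) q
             else 0)
  \<and> inverse_on 1 n
      (\<lambda>k m. cpol (int k) (int m) q)
      (\<lambda>k m. if m \<le> k then (-1) ^ (k - m) * (1 - q) ^ (k - m + 1) * evp (Qpol k (k - m)) q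
                 / (\<Prod>i=0..k-m. 1 - q ^ (2*k - 2*i + 1))
             else 0)
  \<and> inverse_on 1 n
      (\<lambda>k m. gpol (int k) (int m) q)
      (\<lambda>k m. if m \<le> k then (-1) ^ (k - m) * evp (Gpol k (k - m)) q
                 / (\<Prod>i=0..k-m. 1 + q ^ (k - i))
             else 0)
  \<and> inverse_on 1 n
      (\<lambda>k m. dpol (int k) (int m) q)
      (\<lambda>k m. if m \<le> k then (-1) ^ (k - m) * evp (Hpol k (k - m)) q
                 / ((1 + q) ^ (k - m + 1) * (\<Prod>i=0..k-m. 1 + q ^ (2*k - 2*i - 1)))
             else 0)"
  using inverse_on_hmat[OF assms(2,3)] inverse_on_cmat[OF assms(2,3)]
    inverse_on_gmat[OF assms(2)] inverse_on_dmat[OF assms(2)]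
  by blast

end
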